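(* In the Gaussian first-order bifurcating autoregressive model described below, let $(b_n)$ be an increasing sequence of positive reals with $b_n/\sqrt n\to+\infty$ and $b_n/\sqrt{n\log n}\to0$. Then $\hat\theta^r$ converges $\frac{b_{|\mathbb T_r|}^2}{|\mathbb T_r|}$-superexponentially fast in probability to $\theta$: for every $\delta>0$, $$\limsup_{r\to\infty}\frac{|\mathbb T_r|}{b_{|\mathbb T_r|}^2}\log\mathbb P\big(\|\hat\theta^r-\theta\|>\delta\big)=-\infty.$$
   Context: Let $\mathbb T=\mathbb N^*$ (vertex $n$ has daughters $2n,2n+1$), $\mathbb G_r=\{2^r,\dots,2^{r+1}-1\}$, $\mathbb T_r=\bigcup_{q=0}^r\mathbb G_q$, $|\mathbb T_r|=2^{r+1}-1$. The model: $\mathcal L(X_1)=\nu$, a probability on $\mathbb R$ with finite moments of all orders, and for $n\ge1$, $X_{2n}=\alpha_0X_n+\beta_0+\varepsilon_{2n}$, $X_{2n+1}=\alpha_1X_n+\beta_1+\varepsilon_{2n+1}$, where $\alpha_0,\alpha_1\in(-1,1)$, $\beta_0,\beta_1\in\mathbb R$, and $((\varepsilon_{2n},\varepsilon_{2n+1}))_{n\ge1}$ are i.i.d. $\mathcal N_2(0,\Gamma)$, independent of $X_1$, with $\Gamma=\sigma^2\begin{pmatrix}1&\rho\\\rho&1\end{pmatrix}$, $\sigma^2>0$, $\rho\in(-1,1)$. Let $\theta=(\alpha_0,\beta_0,\alpha_1,\beta_1)$. Observing $(X_i)_{i\in\mathbb T_{r+1}}$, the least squares estimator $\hat\theta^r=(\hat\alpha^r_0,\hat\beta^r_0,\hat\alpha^r_1,\hat\beta^r_1)$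 is, for $\eta\in\{0,1\}$, $$\hat\alpha^r_\eta=\frac{|\mathbb T_r|^{-1}\sum_{i\in\mathbb T_r}X_iX_{2i+\eta}-\big(|\mathbb T_r|^{-1}\sum_{i\in\mathbb T_r}X_i\big)\big(|\mathbb T_r|^{-1}\sum_{i\in\mathbb T_r}X_{2i+\eta}\big)}{|\mathbb T_r|^{-1}\sum_{i\in\mathbb T_r}X_i^2-\big(|\mathbb T_r|^{-1}\sum_{i\in\mathbb T_r}X_i\big)^2},\quad \hat\beta^r_\eta=|\mathbb T_r|^{-1}\sum_{i\in\mathbb T_r}X_{2i+\eta}-\hat\alpha^r_\eta|\mathbb T_r|^{-1}\sum_{i\in\mathbb T_r}X_i.$$ *)

theory Defs
  imports "HOL-Probability.Probability"
begin

text \<open>The subtree T_r = G_0 \<union> ... \<union> G_r = {1, ..., 2^(r+1) - 1} of the binary tree N*.\<close>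
definition Tset :: "nat \<Rightarrow> nat set" where
  "Tset r = {1..<2^(r+1)}"

definition tavg :: "nat \<Rightarrow> (nat \<Rightarrow> real) \<Rightarrow> real" where
  "tavg r f = (\<Sum>i\<in>Tset r. f i) / real (card (Tset r))"

text \<open>Least squares estimators computed from the observed values x i, i in T_(r+1).\<close>
definition hat_alpha :: "nat \<Rightarrow> nat \<Rightarrow> (nat \<Rightarrow> real) \<Rightarrow> real" where
  "hat_alpha eta r x =
     (tavg r (\<lambda>i. x i * x (2*i + eta)) - tavg r x * tavg r (\<lambda>i. x (2*i + eta)))
     / (tavg r (\<lambda>i. (x i)^2) - (tavg r x)^2)"

definition hat_beta :: "nat \<Rightarrow> nat \<Rightarrow> (nat \<Rightarrow> real) \<Rightarrow> real" where
  "hat_beta eta r x = tavg r (\<lambda>i. x (2*i + eta)) - hat_alpha eta r x * tavg r x"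

definition hat_theta :: "nat \<Rightarrow> (nat \<Rightarrow> real) \<Rightarrow> real \<times> real \<times> real \<times> real" where
  "hat_theta r x = (hat_alpha 0 r x, hat_beta 0 r x, hat_alpha 1 r x, hat_beta 1 r x)"

text \<open>Density of the centred bivariate normal N_2(0, Gamma), Gamma = s2 [[1, rho],[rho, 1]].\<close>
definition binormal_density :: "real \<Rightarrow> real \<Rightarrow> real \<times> real \<Rightarrow> real" where
  "binormal_density s2 rho p =
     exp (- ((fst p)^2 - 2 * rho * (fst p) * (snd p) + (snd p)^2) / (2 * s2 * (1 - rho^2)))
     / (2 * pi * s2 * sqrt (1 - rho^2))"

definition eln :: "real \<Rightarrow> ereal" where
  "eln p = (if p = 0 then -\<infinity> else ereal (ln p))"

end

theory Submission
  imports Defs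
begin

text \<open>Centring the least-squares equations, the estimation errors become ratios whose numerators
  are empirical averages of \<open>\<epsilon>\<^sub>2\<^sub>i\<^sub>+\<^sub>\<eta>\<close>, \<open>X\<^sub>i \<epsilon>\<^sub>2\<^sub>i\<^sub>+\<^sub>\<eta>\<close> and \<open>X\<^sub>i\<close> over \<open>T\<^sub>r\<close>, and whose
  denominator, the empirical variance of \<open>X\<close>, is bounded below through the truncated squares
  \<open>min (\<epsilon>\<^sub>2\<^sub>i\<^sup>2) 1\<close> of the left children. All of these are sums of martingale differences with
  bounded second moments, so Chebyshev's inequality makes the probability of an error larger than
  \<open>\<delta>\<close> decay like \<open>|T\<^sub>r|\<^sup>-\<^sup>1\<^sup>/\<^sup>8\<close>. Polynomial decay is already superexponential at speed
  \<open>b\<^sub>n\<^sup>2/n\<close>, because \<open>b\<^sub>n\<^sup>2/n = o(log n)\<close>.\<close>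

section \<open>Gaussian densities\<close>

lemma integrable_lborel_pair_product:
  fixes f h :: "real \<Rightarrow> real"
  assumes f: "integrable lborel f" and h: "integrable lborel h"
  shows "integrable (lborel \<Otimes>\<^sub>M lborel) (\<lambda>p. f (fst p) * h (snd p))"
proof -
  have [measurable]: "f \<in> borel_measurable borel" "h \<in> borel_measurable borel"
    using f h by auto
  have "(\<integral>\<^sup>+p. ennreal (norm (f (fst p) * h (snd p))) \<partial>(lborel \<Otimes>\<^sub>M lborel))
      = (\<integral>\<^sup>+x. \<integral>\<^sup>+y. ennreal (norm (f x)) * ennreal (norm (h y)) \<partial>lborel \<partial>lborel)"
    by (subst sigma_finite_measure.nn_integral_fst[OF sigma_finite_lborel, symmetric])
      (auto simp: abs_mult ennreal_mult)
  also have "\<dots> = (\<integral>\<^sup>+x. ennreal (norm (f x)) \<partial>lborel) * (\<integral>\<^sup>+y. ennreal (norm (h y)) \<partial>lborel)"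
    by (simp add: nn_integral_cmult nn_integral_multc)
  also have "\<dots> < \<infinity>"
    using f h by (simp add: integrable_iff_bounded ennreal_mult_less_top)
  finally show ?thesis
    by (subst integrable_iff_bounded) auto
qed

lemma integrable_gaussian_moment:
  fixes c :: real
  assumes c: "c > 0"
  shows "integrable lborel (\<lambda>x. exp (- c * x^2) * x^k)"
proof -
  define \<sigma> where "\<sigma> = sqrt (1 / (2 * c))"
  have \<sigma>: "\<sigma> > 0" "\<sigma>^2 = 1 / (2 * c)"
    using c by (simp_all add: \<sigma>_def)
  have "exp (- c * x^2) * x^k = sqrt (2 * pi * \<sigma>^2) * (normal_density 0 \<sigma> x * (x - 0)^k)" for x
    using \<sigma> c by (simp add: normal_density_def)
  then show ?thesis
    using \<sigma> by (simp only:) (intro integrable_mult_right integrable_normal_moment)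
qed

lemma measurable_fst_real_pair [measurable]: "(fst :: real \<times> real \<Rightarrow> real) \<in> borel_measurable borel"
  unfolding borel_prod[symmetric] by measurable

lemma measurable_snd_real_pair [measurable]: "(snd :: real \<times> real \<Rightarrow> real) \<in> borel_measurable borel"
  unfolding borel_prod[symmetric] by measurable

lemma binormal_density_measurable [measurable]: "binormal_density s r \<in> borel_measurable borel"
  unfolding binormal_density_def by measurable

lemma binormal_density_pos:
  assumes "s > 0" "\<bar>r\<bar> < 1"
  shows "binormal_density s r p > 0"
proof -
  have "r^2 < 1"
    using assms by (simp add: abs_square_less_1)
  then show ?thesis
    using assms unfolding binormal_density_def by auto
qed

lemma binormal_density_le_gaussian_product:
  assumes s: "s > 0" and r: "\<bar>r\<bar> < 1"
  defines "c \<equiv> (1 - \<bar>r\<bar>) / (2 * s * (1 - r^2))"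
  shows "binormal_density s r p
           \<le> binormal_density s r 0 * exp (- c * (fst p)^2) * exp (- c * (snd p)^2)"
proof -
  obtain x y where p: "p = (x, y)"
    by (cases p)
  define D where "D = 2 * s * (1 - r^2)"
  have r2: "r^2 < 1"
    using r by (simp add: abs_square_less_1)
  then have D: "D > 0"
    using s by (auto simp: D_def)
  have "2 * r * x * y \<le> \<bar>r\<bar> * (2 * \<bar>x * y\<bar>)"
    using abs_ge_self[of "2 * r * x * y"] by (simp add: abs_mult mult.assoc)
  also have "\<dots> \<le> \<bar>r\<bar> * (x^2 + y^2)"
    using sum_squares_bound[of "\<bar>x\<bar>" "\<bar>y\<bar>"] by (intro mult_left_mono) (auto simp: abs_mult)
  finally have "(1 - \<bar>r\<bar>) * (x^2 + y^2) / D \<le> (x^2 - 2 * r * x * y + y^2) / D"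
    using D by (intro divide_right_mono) (auto simp: algebra_simps)
  then have "- (x^2 - 2 * r * x * y + y^2) / D \<le> - c * x^2 + - c * y^2"
    using D by (simp add: c_def[folded D_def] field_simps)
  then have "exp (- (x^2 - 2 * r * x * y + y^2) / D) \<le> exp (- c * x^2) * exp (- c * y^2)"
    by (simp add: exp_add[symmetric])
  moreover have "2 * pi * s * sqrt (1 - r^2) > 0"
    using r2 s by simp
  ultimately show ?thesis
    unfolding binormal_density_def p D_def
    by (simp add: divide_right_mono mult.assoc)
qed

definition pair_coord :: "nat \<Rightarrow> real \<times> real \<Rightarrow> real" where
  "pair_coord \<eta> p = (if \<eta> = 0 then fst p else snd p)"

lemma pair_coord_measurable [measurable]: "pair_coord \<eta> \<in> borel_measurable borel"
  unfolding pair_coord_def by (cases "\<eta> = 0") auto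

lemma integrable_binormal_density_coord_sq:
  assumes s: "s > 0" and r: "\<bar>r\<bar> < 1"
  shows "integrable lborel (\<lambda>p. binormal_density s r p * (pair_coord \<eta> p)^2)"
proof -
  define c where "c = (1 - \<bar>r\<bar>) / (2 * s * (1 - r^2))"
  define A where "A = binormal_density s r 0"
  define k0 where "k0 = (if \<eta> = 0 then 2 else 0 :: nat)"
  define k1 where "k1 = (if \<eta> = 0 then 0 else 2 :: nat)"
  have "r^2 < 1"
    using r by (simp add: abs_square_less_1)
  then have c: "c > 0"
    using s r by (auto simp: c_def)
  have A: "A > 0"
    using binormal_density_pos[OF s r] by (simp add: A_def)
  have coord: "(pair_coord \<eta> p)^2 = (fst p)^k0 * (snd p)^k1" for p
    by (simp add: pair_coord_def k0_def k1_def)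
  have "integrable (lborel \<Otimes>\<^sub>M lborel)
          (\<lambda>p. (A * (exp (- c * (fst p)^2) * (fst p)^k0)) * (exp (- c * (snd p)^2) * (snd p)^k1))"
    by (intro integrable_lborel_pair_product integrable_mult_right integrable_gaussian_moment c)
  then show ?thesis
    unfolding lborel_prod
  proof (rule Bochner_Integration.integrable_bound)
    show "AE p in lborel. norm (binormal_density s r p * (pair_coord \<eta> p)^2)
            \<le> norm (A * (exp (- c * (fst p)^2) * (fst p)^k0) * (exp (- c * (snd p)^2) * (snd p)^k1))"
    proof (intro AE_I2)
      fix p :: "real \<times> real"
      have "binormal_density s r p * (pair_coord \<eta> p)^2
              \<le> A * exp (- c * (fst p)^2) * exp (- c * (snd p)^2) * (pair_coord \<eta> p)^2"
        using binormal_density_le_gaussian_product[OF s r, of p]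
        by (intro mult_right_mono) (simp_all add: A_def c_def)
      moreover have "\<bar>fst p ^ k0\<bar> = fst p ^ k0" "\<bar>snd p ^ k1\<bar> = snd p ^ k1"
        by (simp_all add: k0_def k1_def)
      moreover have "0 \<le> binormal_density s r p"
        using binormal_density_pos[OF s r] by (simp add: less_imp_le)
      ultimately show "norm (binormal_density s r p * (pair_coord \<eta> p)^2)
            \<le> norm (A * (exp (- c * (fst p)^2) * (fst p)^k0) * (exp (- c * (snd p)^2) * (snd p)^k1))"
        using A by (simp add: coord abs_mult mult_ac)
    qed
  qed measurable
qed

lemma lborel_pair_reflection: "distr lborel borel uminus = (lborel :: (real \<times> real) measure)"
  by (subst lborel_affine[of "-1" 0]) (auto simp: density_1 one_ennreal_def[symmetric])

lemma binormal_density_coord_mean_zero: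
  "(\<integral>p. binormal_density s r p * pair_coord \<eta> p \<partial>lborel) = 0"
proof -
  have "(\<integral>p. binormal_density s r p * pair_coord \<eta> p \<partial>lborel)
      = (\<integral>p. binormal_density s r p * pair_coord \<eta> p \<partial>distr lborel borel uminus)"
    by (simp add: lborel_pair_reflection)
  also have "\<dots> = (\<integral>p. binormal_density s r (- p) * pair_coord \<eta> (- p) \<partial>lborel)"
    by (subst integral_distr) auto
  also have "\<dots> = - (\<integral>p. binormal_density s r p * pair_coord \<eta> p \<partial>lborel)"
  proof -
    have "binormal_density s r (- p) = binormal_density s r p" "pair_coord \<eta> (- p) = - pair_coord \<eta> p" for p
      by (simp_all add: binormal_density_def pair_coord_def)
    then show ?thesis
      by simp
  qed
  finally show ?thesis
    by simp
qed

lemma binormal_density_truncated_moment_pos: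
  assumes s: "s > 0" and r: "\<bar>r\<bar> < 1"
  shows "(\<integral>p. binormal_density s r p * min ((fst p)^2) 1 \<partial>lborel) > 0"
proof (rule ccontr)
  assume nonpos: "\<not> ?thesis"
  have g: "0 < binormal_density s r p" for p
    using binormal_density_pos[OF s r] .
  have int: "integrable lborel (\<lambda>p. binormal_density s r p * min ((fst p)^2) 1)"
  proof (rule Bochner_Integration.integrable_bound[OF integrable_binormal_density_coord_sq[OF s r, of 0]])
    show "AE p in lborel. norm (binormal_density s r p * min ((fst p)^2) 1)
            \<le> norm (binormal_density s r p * (pair_coord 0 p)^2)"
      using g by (intro AE_I2) (simp add: pair_coord_def abs_mult less_imp_le mult_left_mono)
  qed measurable
  have nonneg: "AE p in lborel. 0 \<le> binormal_density s r p * min ((fst p)^2) 1"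
    using g by (intro AE_I2) (simp add: less_imp_le)
  then have "0 \<le> (\<integral>p. binormal_density s r p * min ((fst p)^2) 1 \<partial>lborel)"
    by (rule integral_nonneg_AE)
  then have "AE p in lborel. binormal_density s r p * min ((fst p)^2) 1 = 0"
    using nonpos integral_nonneg_eq_0_iff_AE[OF int nonneg] by simp
  then have "AE p in lborel. fst (p :: real \<times> real) = 0"
  proof eventually_elim
    case (elim p)
    then show ?case
      using g[of p] by (simp add: min_def split: if_splits)
  qed
  then obtain N where N: "{p :: real \<times> real. fst p \<noteq> 0} \<subseteq> N" "emeasure lborel N = 0" "N \<in> sets lborel"
    by (auto elim!: AE_E)
  have "emeasure (lborel \<Otimes>\<^sub>M lborel) ({1..2::real} \<times> {1..2::real}) = 1"
    by (subst sigma_finite_measure.emeasure_pair_measure_Times[OF sigma_finite_lborel]) auto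
  then have "emeasure lborel ({1..2::real} \<times> {1..2::real}) = 1"
    by (simp add: lborel_prod)
  moreover have "emeasure lborel ({1..2::real} \<times> {1..2::real}) \<le> emeasure lborel N"
    using N by (intro emeasure_mono) auto
  ultimately show False
    using N(2) by simp
qed

section \<open>The least-squares estimator\<close>

lemma card_Tset: "card (Tset r) = 2^(r+1) - 1"
  by (simp add: Tset_def)

lemma card_Tset_pos: "card (Tset r) \<ge> 1"
proof -
  have "(2::nat) \<le> 2^(r+1)"
    by simp
  then show ?thesis
    unfolding card_Tset by linarith
qed

lemma card_Tset_Suc: "real (card (Tset (k+1))) = 2 * real (card (Tset k)) + 1"
proof -
  define p :: nat where "p = 2^(k+1)"
  have "1 \<le> p" "(2::nat)^(k+2) = 2 * p"
    by (simp_all add: p_def)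
  moreover have "2 * p - 1 = 2 * (p - 1) + 1"
    using \<open>1 \<le> p\<close> by arith
  ultimately have "(2::nat)^(k+2) - 1 = 2 * (2^(k+1) - 1) + 1"
    by (simp add: p_def)
  then show ?thesis
    by (simp add: card_Tset)
qed

lemma Tset_ge_one: "i \<in> Tset r \<Longrightarrow> i \<ge> 1"
  by (simp add: Tset_def)

lemma finite_Tset [simp]: "finite (Tset r)"
  by (simp add: Tset_def)

lemma Tset_subset_atLeast_one: "Tset r \<subseteq> {1..}"
  by (auto simp: Tset_def)

lemma card_Tset_ge: "card (Tset r) \<ge> r + 1"
proof -
  have "r + 1 < 2^(r+1)"
    by (rule less_exp)
  then show ?thesis
    by (simp add: card_Tset)
qed

lemma double_image_Tset: "(\<lambda>i. 2*i) ` Tset k \<subseteq> Tset (k+1)"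
  by (auto simp: Tset_def)

lemma hat_alpha_beta_eq:
  fixes x :: "nat \<Rightarrow> real" and a b :: real and r \<eta> :: nat
  defines "T \<equiv> Tset r" and "n \<equiv> real (card (Tset r))"
  defines "e \<equiv> (\<lambda>i. x (2*i+\<eta>) - a * x i - b)"
  defines "S \<equiv> (\<Sum>i\<in>T. x i)" and "Q \<equiv> (\<Sum>i\<in>T. (x i)^2)"
    and "E \<equiv> (\<Sum>i\<in>T. e i)" and "P \<equiv> (\<Sum>i\<in>T. x i * e i)"
  defines "V \<equiv> Q / n - (S / n)^2"
  assumes V: "V \<noteq> 0"
  shows "hat_alpha \<eta> r x = a + (P / n - (S / n) * (E / n)) / V"
    and "hat_beta \<eta> r x = b + E / n - (hat_alpha \<eta> r x - a) * (S / n)"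
proof -
  have n: "n > 0"
    using card_Tset_pos[of r] by (simp add: n_def)
  have "(\<Sum>i\<in>T. x i * x (2*i+\<eta>)) = (\<Sum>i\<in>T. a * (x i)^2 + b * x i + x i * e i)"
    by (intro sum.cong refl) (simp add: e_def algebra_simps power2_eq_square)
  then have cross: "tavg r (\<lambda>i. x i * x (2*i+\<eta>)) = a * (Q/n) + b * (S/n) + P/n"
    by (simp add: tavg_def sum.distrib sum_distrib_left add_divide_distrib
        Q_def S_def P_def T_def n_def)
  have "(\<Sum>i\<in>T. x (2*i+\<eta>)) = (\<Sum>i\<in>T. a * x i + b + e i)"
    by (intro sum.cong refl) (simp add: e_def)
  also have "\<dots> = a * S + b * n + E"
    by (simp add: sum.distrib sum_distrib_left S_def E_def n_def T_def)
  moreover have "(a * S + b * n + E) / n = a * (S/n) + b + E/n"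
    using n by (simp add: add_divide_distrib)
  ultimately have children: "tavg r (\<lambda>i. x (2*i+\<eta>)) = a * (S/n) + b + E/n"
    by (simp add: tavg_def T_def n_def)
  have mean: "tavg r x = S / n" and square: "tavg r (\<lambda>i. (x i)^2) = Q / n"
    by (simp_all add: tavg_def T_def n_def S_def Q_def)
  have num: "a * (Q/n) + b * (S/n) + P/n - (S / n) * (a * (S/n) + b + E/n)
          = a * V + (P / n - (S / n) * (E / n))"
    unfolding V_def by (simp add: algebra_simps power2_eq_square)
  show "hat_alpha \<eta> r x = a + (P / n - (S / n) * (E / n)) / V"
    unfolding hat_alpha_def cross children mean square num V_def[symmetric]
    using V by (simp add: add_divide_distrib)
  show "hat_beta \<eta> r x = b + E / n - (hat_alpha \<eta> r x - a) * (S / n)"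
    unfolding hat_beta_def children mean by (simp add: algebra_simps)
qed

lemma hat_alpha_beta_error_le:
  fixes x :: "nat \<Rightarrow> real" and a b u L v :: real and r \<eta> :: nat
  defines "T \<equiv> Tset r" and "n \<equiv> real (card (Tset r))"
  defines "e \<equiv> (\<lambda>i. x (2*i+\<eta>) - a * x i - b)"
  defines "S \<equiv> (\<Sum>i\<in>T. x i)" and "Q \<equiv> (\<Sum>i\<in>T. (x i)^2)"
  defines "V \<equiv> Q / n - (S / n)^2"
  assumes V: "V \<ge> v" and v: "v > 0" and u: "u > 0"
    and E: "\<bar>\<Sum>i\<in>T. e i\<bar> < u * n" and P: "\<bar>\<Sum>i\<in>T. x i * e i\<bar> < u * n"
    and S: "\<bar>S\<bar> < L * n"
  shows "\<bar>hat_alpha \<eta> r x - a\<bar> \<le> (u + L * u) / v"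
    and "\<bar>hat_beta \<eta> r x - b\<bar> \<le> u + L * ((u + L * u) / v)"
proof -
  have n: "n > 0"
    using card_Tset_pos[of r] by (simp add: n_def)
  define E' where "E' = (\<Sum>i\<in>T. e i)"
  define P' where "P' = (\<Sum>i\<in>T. x i * e i)"
  have eq: "hat_alpha \<eta> r x = a + (P' / n - (S / n) * (E' / n)) / V"
    "hat_beta \<eta> r x = b + E' / n - (hat_alpha \<eta> r x - a) * (S / n)"
    using hat_alpha_beta_eq[where x=x and a=a and b=b and r=r and \<eta>=\<eta>] V v
    unfolding V_def Q_def S_def n_def T_def E'_def P'_def e_def by auto
  have En: "\<bar>E' / n\<bar> \<le> u" and Pn: "\<bar>P' / n\<bar> \<le> u" and Sn: "\<bar>S / n\<bar> \<le> L"
    using E P S n by (simp_all add: E'_def P'_def abs_divide divide_le_eq less_imp_le)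
  have L: "L \<ge> 0"
    using S n by (smt (verit) mult_nonpos_nonneg)
  have "\<bar>(S / n) * (E' / n)\<bar> \<le> L * u"
    unfolding abs_mult using Sn En L by (intro mult_mono) auto
  then have num: "\<bar>P' / n - (S / n) * (E' / n)\<bar> \<le> u + L * u"
    using Pn by linarith
  have "\<bar>hat_alpha \<eta> r x - a\<bar> = \<bar>P' / n - (S / n) * (E' / n)\<bar> / V"
    using eq(1) V v by (simp add: abs_divide)
  also have "\<dots> \<le> (u + L * u) / V"
    using num V v by (simp add: divide_right_mono)
  also have "\<dots> \<le> (u + L * u) / v"
    using V v u L by (intro divide_left_mono) auto
  finally show alpha: "\<bar>hat_alpha \<eta> r x - a\<bar> \<le> (u + L * u) / v" .
  have "\<bar>hat_beta \<eta> r x - b\<bar> \<le> \<bar>E' / n\<bar> + \<bar>hat_alpha \<eta> r x - a\<bar> * \<bar>S / n\<bar>"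
    using abs_triangle_ineq4[of "E' / n" "(hat_alpha \<eta> r x - a) * (S / n)"]
    by (simp only: eq(2) abs_mult) simp
  also have "\<dots> \<le> u + ((u + L * u) / v) * L"
    using En alpha Sn by (intro add_mono mult_mono) auto
  finally show "\<bar>hat_beta \<eta> r x - b\<bar> \<le> u + L * ((u + L * u) / v)"
    by (simp add: mult.commute)
qed

text \<open>Truncating \<open>d\<^sup>2\<close> at 1 keeps the lower bound controllable with second moments only.\<close>

lemma card_mul_empirical_variance_ge:
  fixes x :: "nat \<Rightarrow> real" and a b :: real and k :: nat
  defines "T \<equiv> Tset (k+1)" and "n \<equiv> real (card (Tset (k+1)))"
  defines "S \<equiv> (\<Sum>i\<in>T. x i)" and "Q \<equiv> (\<Sum>i\<in>T. (x i)^2)"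
  defines "d \<equiv> (\<lambda>i. x (2*i) - a * x i - b)"
  shows "n * (Q / n - (S / n)^2)
           \<ge> (\<Sum>i\<in>Tset k. min ((d i)^2) 1) + 2 * a * (\<Sum>i\<in>Tset k. x i * d i)
              + 2 * (b - S / n) * (\<Sum>i\<in>Tset k. d i)"
proof -
  have n: "n > 0"
    using card_Tset_pos[of "k+1"] by (simp add: n_def)
  define m where "m = S / n"
  have "(\<Sum>i\<in>T. (x i - m)^2) = (\<Sum>i\<in>T. (x i)^2 - 2 * m * x i + m^2)"
    by (intro sum.cong refl) (simp add: power2_eq_square algebra_simps)
  also have "\<dots> = Q - 2 * m * S + n * m^2"
    by (simp add: sum.distrib sum_subtractf sum_distrib_left Q_def S_def n_def T_def)
  also have "\<dots> = n * (Q / n - m^2)"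
    using n by (simp add: m_def algebra_simps power2_eq_square)
  finally have centred: "n * (Q / n - m^2) = (\<Sum>i\<in>T. (x i - m)^2)" ..
  have "(\<Sum>i\<in>Tset k. (x (2*i) - m)^2) = (\<Sum>j\<in>(\<lambda>i. 2*i) ` Tset k. (x j - m)^2)"
    by (simp add: sum.reindex inj_on_def)
  also have "\<dots> \<le> (\<Sum>i\<in>T. (x i - m)^2)"
    using double_image_Tset[of k] by (intro sum_mono2) (auto simp: T_def)
  finally have left_children: "(\<Sum>i\<in>Tset k. (x (2*i) - m)^2) \<le> (\<Sum>i\<in>T. (x i - m)^2)" .
  have pointwise: "min ((d i)^2) 1 + 2 * (a * x i + b - m) * d i \<le> (x (2*i) - m)^2" for i
  proof -
    have "(x (2*i) - m)^2 = (a * x i + b - m)^2 + 2 * (a * x i + b - m) * d i + (d i)^2"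
      by (simp add: d_def power2_eq_square algebra_simps)
    then show ?thesis
      by (smt (verit) zero_le_power2 min.cobounded1)
  qed
  have "(\<Sum>i\<in>Tset k. min ((d i)^2) 1) + 2 * a * (\<Sum>i\<in>Tset k. x i * d i) + 2 * (b - m) * (\<Sum>i\<in>Tset k. d i)
      = (\<Sum>i\<in>Tset k. min ((d i)^2) 1 + (2 * a) * (x i * d i) + (2 * (b - m)) * d i)"
    by (simp add: sum.distrib sum_distrib_left)
  also have "\<dots> = (\<Sum>i\<in>Tset k. min ((d i)^2) 1 + 2 * (a * x i + b - m) * d i)"
    by (intro sum.cong refl) (simp add: algebra_simps)
  also have "\<dots> \<le> (\<Sum>i\<in>Tset k. (x (2*i) - m)^2)"
    by (intro sum_mono pointwise)
  finally show ?thesis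
    using centred left_children by (simp add: m_def)
qed

lemma norm_prod4_le: "norm ((p, q, r, t) :: real \<times> real \<times> real \<times> real) \<le> \<bar>p\<bar> + \<bar>q\<bar> + \<bar>r\<bar> + \<bar>t\<bar>"
proof -
  have "norm (p, q, r, t) \<le> norm p + norm (q, r, t)"
    by (rule norm_Pair_le)
  also have "norm (q, r, t) \<le> norm q + norm (r, t)"
    by (rule norm_Pair_le)
  also have "norm (r, t) \<le> norm r + norm t"
    by (rule norm_Pair_le)
  finally show ?thesis
    by simp
qed

lemma empirical_variance_ge_of_small_sums:
  fixes x :: "nat \<Rightarrow> real" and a b u L \<mu> :: real and k :: nat
  defines "T \<equiv> Tset (k+1)" and "n \<equiv> real (card (Tset (k+1)))" and "n' \<equiv> real (card (Tset k))"
  defines "d \<equiv> (\<lambda>i. x (2*i) - a * x i - b)"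
  defines "S \<equiv> (\<Sum>i\<in>T. x i)"
  assumes a: "\<bar>a\<bar> < 1" and \<mu>: "\<mu> > 0"
    and S: "\<bar>S\<bar> < L * n"
    and E: "\<bar>\<Sum>i\<in>Tset k. d i\<bar> < u * n'" and P: "\<bar>\<Sum>i\<in>Tset k. x i * d i\<bar> < u * n'"
    and truncated: "(\<Sum>i\<in>Tset k. min ((d i)^2) 1) > n' * \<mu> / 2"
    and drift: "2 * u + 2 * (\<bar>b\<bar> + L) * u \<le> \<mu> / 4"
  shows "(\<Sum>i\<in>T. (x i)^2) / n - (S / n)^2 \<ge> \<mu> / 12"
proof -
  have n: "n > 0" and n': "n' \<ge> 1"
    using card_Tset_pos[of "k+1"] card_Tset_pos[of k] by (simp_all add: n_def n'_def)
  have L: "L \<ge> 0"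
    using S n by (smt (verit) mult_nonpos_nonneg)
  have "\<bar>S / n\<bar> \<le> L"
    using S n by (simp add: abs_divide divide_le_eq less_imp_le)
  then have "\<bar>b - S / n\<bar> \<le> \<bar>b\<bar> + L"
    using abs_triangle_ineq4[of b "S / n"] by linarith
  then have "\<bar>b - S / n\<bar> * \<bar>\<Sum>i\<in>Tset k. d i\<bar> \<le> (\<bar>b\<bar> + L) * (u * n')"
    using E L by (intro mult_mono) auto
  then have linear: "\<bar>2 * (b - S / n) * (\<Sum>i\<in>Tset k. d i)\<bar> \<le> 2 * ((\<bar>b\<bar> + L) * (u * n'))"
    by (simp only: abs_mult mult.assoc abs_numeral)
  have "\<bar>a\<bar> * \<bar>\<Sum>i\<in>Tset k. x i * d i\<bar> \<le> 1 * (u * n')"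
    using a P by (intro mult_mono) auto
  then have cross: "\<bar>2 * a * (\<Sum>i\<in>Tset k. x i * d i)\<bar> \<le> 2 * u * n'"
    by (simp add: abs_mult)
  have "n * ((\<Sum>i\<in>T. (x i)^2) / n - (S / n)^2)
          \<ge> n' * \<mu> / 2 - 2 * u * n' - 2 * ((\<bar>b\<bar> + L) * (u * n'))"
    using card_mul_empirical_variance_ge[where k=k and x=x and a=a and b=b] linear cross truncated
    unfolding T_def n_def S_def d_def by linarith
  also have "n' * \<mu> / 2 - 2 * u * n' - 2 * ((\<bar>b\<bar> + L) * (u * n'))
               = n' * (\<mu> / 2 - (2 * u + 2 * (\<bar>b\<bar> + L) * u))"
    by (simp add: algebra_simps)
  also have "\<dots> \<ge> n' * (\<mu> / 4)"
    using drift n' by (intro mult_left_mono) auto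
  also have "n' * (\<mu> / 4) \<ge> n * (\<mu> / 12)"
    using card_Tset_Suc[of k] n' \<mu> by (simp add: n_def n'_def field_simps)
  finally show ?thesis
    using n by simp
qed

lemma hat_theta_error_le:
  fixes x :: "nat \<Rightarrow> real" and a0 b0 a1 b1 u L \<mu> :: real and k :: nat
  defines "T \<equiv> Tset (k+1)" and "n \<equiv> real (card (Tset (k+1)))" and "n' \<equiv> real (card (Tset k))"
  defines "d0 \<equiv> (\<lambda>i. x (2*i) - a0 * x i - b0)" and "d1 \<equiv> (\<lambda>i. x (2*i+1) - a1 * x i - b1)"
  assumes a0: "\<bar>a0\<bar> < 1" and \<mu>: "\<mu> > 0" and u: "u > 0"
    and E0: "\<bar>\<Sum>i\<in>T. d0 i\<bar> < u * n" and E1: "\<bar>\<Sum>i\<in>T. d1 i\<bar> < u * n"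
    and P0: "\<bar>\<Sum>i\<in>T. x i * d0 i\<bar> < u * n" and P1: "\<bar>\<Sum>i\<in>T. x i * d1 i\<bar> < u * n"
    and S: "\<bar>\<Sum>i\<in>T. x i\<bar> < L * n"
    and E0': "\<bar>\<Sum>i\<in>Tset k. d0 i\<bar> < u * n'" and P0': "\<bar>\<Sum>i\<in>Tset k. x i * d0 i\<bar> < u * n'"
    and truncated: "(\<Sum>i\<in>Tset k. min ((d0 i)^2) 1) > n' * \<mu> / 2"
    and drift: "2 * u + 2 * (\<bar>b0\<bar> + L) * u \<le> \<mu> / 4"
  shows "norm (hat_theta (k+1) x - (a0, b0, a1, b1))
           \<le> 2 * ((u + L * u) / (\<mu> / 12)) + 2 * (u + L * ((u + L * u) / (\<mu> / 12)))"
proof -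
  define A where "A = (u + L * u) / (\<mu> / 12)"
  define B where "B = u + L * A"
  have V: "(\<Sum>i\<in>T. (x i)^2) / n - ((\<Sum>i\<in>T. x i) / n)^2 \<ge> \<mu> / 12"
    using empirical_variance_ge_of_small_sums[where x=x and k=k and a=a0 and b=b0 and u=u and L=L and \<mu>=\<mu>] a0 \<mu> S E0' P0' truncated drift
    unfolding T_def n_def n'_def d0_def by blast
  have "\<bar>hat_alpha 0 (k+1) x - a0\<bar> \<le> A" "\<bar>hat_beta 0 (k+1) x - b0\<bar> \<le> B"
    using hat_alpha_beta_error_le[where r="k+1" and x=x and \<eta>=0 and a=a0 and b=b0 and u=u and L=L
        and v="\<mu> / 12"] V \<mu> u E0 P0 S
    unfolding A_def B_def T_def n_def d0_def by auto
  moreover have "\<bar>hat_alpha 1 (k+1) x - a1\<bar> \<le> A" "\<bar>hat_beta 1 (k+1) x - b1\<bar> \<le> B"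
    using hat_alpha_beta_error_le[where r="k+1" and x=x and \<eta>=1 and a=a1 and b=b1 and u=u and L=L
        and v="\<mu> / 12"] V \<mu> u E1 P1 S
    unfolding A_def B_def T_def n_def d1_def by auto
  moreover have "norm (hat_theta (k+1) x - (a0, b0, a1, b1))
      \<le> \<bar>hat_alpha 0 (k+1) x - a0\<bar> + \<bar>hat_beta 0 (k+1) x - b0\<bar>
         + \<bar>hat_alpha 1 (k+1) x - a1\<bar> + \<bar>hat_beta 1 (k+1) x - b1\<bar>"
    unfolding hat_theta_def using norm_prod4_le by simp
  ultimately have "norm (hat_theta (k+1) x - (a0, b0, a1, b1)) \<le> 2 * A + 2 * B"
    by linarith
  then show ?thesis
    by (simp add: A_def B_def)
qed

lemma inverse_cube_error_bound_le:
  fixes q \<mu> :: real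
  assumes q: "q \<ge> 1" and \<mu>: "\<mu> > 0"
  defines "u \<equiv> 1 / q^3"
  shows "2 * ((u + q * u) / (\<mu> / 12)) + 2 * (u + q * ((u + q * u) / (\<mu> / 12)))
           \<le> (96 / \<mu> + 2) / q"
proof -
  have q0: "q > 0"
    using q by simp
  have cube: "u \<le> 1 / q^2"
    using q unfolding u_def by (intro divide_left_mono power_increasing) auto
  have square: "1 / q^2 \<le> 1 / q"
    using q by (intro divide_left_mono) (auto simp: power2_eq_square)
  have q_u: "q * u = 1 / q^2"
    using q0 by (simp add: u_def power2_eq_square power3_eq_cube)
  have A: "(u + q * u) / (\<mu> / 12) \<le> 24 / \<mu> * (1 / q^2)"
    using cube q_u \<mu> by (simp add: field_simps)
  have "q * ((u + q * u) / (\<mu> / 12)) \<le> q * (24 / \<mu> * (1 / q^2))"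
    using A q0 by (intro mult_left_mono) auto
  also have "\<dots> = 24 / \<mu> * (1 / q)"
    using q0 by (simp add: power2_eq_square)
  finally have "q * ((u + q * u) / (\<mu> / 12)) \<le> 24 / \<mu> * (1 / q)" .
  moreover have "24 / \<mu> * (1 / q^2) \<le> 24 / \<mu> * (1 / q)"
    using square \<mu> by (intro mult_left_mono) auto
  ultimately have "2 * ((u + q * u) / (\<mu> / 12)) + 2 * (u + q * ((u + q * u) / (\<mu> / 12)))
      \<le> 2 * (24 / \<mu> * (1 / q)) + 2 * (1 / q + 24 / \<mu> * (1 / q))"
    using order_trans[OF A] order_trans[OF cube square] by (intro add_mono mult_left_mono) auto
  also have "\<dots> = (96 / \<mu> + 2) / q"
    by (simp add: add_divide_distrib algebra_simps)
  finally show ?thesis .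
qed

lemma inverse_cube_drift_le:
  fixes q b :: real
  assumes q: "q \<ge> 1"
  defines "u \<equiv> 1 / q^3"
  shows "2 * u + 2 * (\<bar>b\<bar> + q) * u \<le> (4 + 2 * \<bar>b\<bar>) / q"
proof -
  have q0: "q > 0"
    using q by simp
  have "u \<le> 1 / q"
    using q unfolding u_def by (intro divide_left_mono power_increasing[of 1 3, simplified]) auto
  moreover have "q * u \<le> 1 / q"
    using q unfolding u_def by (simp add: power2_eq_square power3_eq_cube field_simps)
  ultimately have "2 * u + 2 * \<bar>b\<bar> * u + 2 * (q * u) \<le> 2 * (1 / q) + 2 * \<bar>b\<bar> * (1 / q) + 2 * (1 / q)"
    by (intro add_mono mult_left_mono) auto
  then show ?thesis
    by (simp add: add_divide_distrib algebra_simps)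
qed

lemma chebyshev_rate_le:
  fixes q n K :: real
  assumes q: "q \<ge> 1" and n: "n \<ge> q^8" and K: "K \<ge> 0"
  shows "n * K / ((1 / q^3) * n)^2 \<le> K / q"
proof -
  have q0: "q > 0"
    using q by simp
  have n0: "n > 0"
    using n q0 by (smt (verit) zero_less_power)
  have "n * K / ((1 / q^3) * n)^2 = K * q^6 / n"
    using n0 q0 by (simp add: field_simps power2_eq_square power_mult_distrib)
  also have "\<dots> \<le> K * q^6 / q^8"
    using n q0 K n0 by (intro divide_left_mono mult_nonneg_nonneg mult_pos_pos) auto
  also have "\<dots> = K / q^2"
    using q0 by (simp add: field_simps power_def)
  also have "\<dots> \<le> K / q"
    using q K by (intro divide_left_mono) (auto simp: power2_eq_square)
  finally show ?thesis .
qed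

section \<open>Second-moment tools\<close>

lemma abs_le_one_plus_square: "\<bar>x :: real\<bar> \<le> 1 + x^2"
proof (cases "\<bar>x\<bar> \<le> 1")
  case False
  then have "\<bar>x\<bar> * 1 \<le> \<bar>x\<bar> * \<bar>x\<bar>"
    by (intro mult_left_mono) auto
  then show ?thesis
    by (simp add: power2_eq_square)
qed (smt (verit) zero_le_power2)

lemma (in finite_measure) integrable_of_integrable_square:
  fixes f :: "'a \<Rightarrow> real"
  assumes [measurable]: "f \<in> borel_measurable M" and "integrable M (\<lambda>\<omega>. (f \<omega>)^2)"
  shows "integrable M f"
proof (rule Bochner_Integration.integrable_bound[of _ "\<lambda>\<omega>. 1 + (f \<omega>)^2"])
  show "integrable M (\<lambda>\<omega>. 1 + (f \<omega>)^2)"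
    using assms by auto
  show "AE x in M. norm (f x) \<le> norm (1 + (f x)^2)"
    using abs_le_one_plus_square by (intro AE_I2) simp
qed simp

lemma integral_square_sum_orthogonal:
  fixes Z :: "nat \<Rightarrow> 'a \<Rightarrow> real"
  assumes "finite I"
    and int: "\<And>i j. i \<in> I \<Longrightarrow> j \<in> I \<Longrightarrow> integrable M (\<lambda>\<omega>. Z i \<omega> * Z j \<omega>)"
    and orth: "\<And>i j. i \<in> I \<Longrightarrow> j \<in> I \<Longrightarrow> i < j \<Longrightarrow> (\<integral>\<omega>. Z i \<omega> * Z j \<omega> \<partial>M) = 0"
  shows "integrable M (\<lambda>\<omega>. (\<Sum>i\<in>I. Z i \<omega>)^2)"
    and "(\<integral>\<omega>. (\<Sum>i\<in>I. Z i \<omega>)^2 \<partial>M) = (\<Sum>i\<in>I. \<integral>\<omega>. (Z i \<omega>)^2 \<partial>M)"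
proof -
  have square: "(\<Sum>i\<in>I. Z i \<omega>)^2 = (\<Sum>i\<in>I. \<Sum>j\<in>I. Z i \<omega> * Z j \<omega>)" for \<omega>
    by (simp add: power2_eq_square sum_product)
  show "integrable M (\<lambda>\<omega>. (\<Sum>i\<in>I. Z i \<omega>)^2)"
    unfolding square using int by auto
  have diagonal: "(\<integral>\<omega>. Z i \<omega> * Z j \<omega> \<partial>M) = (if i = j then (\<integral>\<omega>. (Z i \<omega>)^2 \<partial>M) else 0)"
    if "i \<in> I" "j \<in> I" for i j
  proof (cases i j rule: linorder_cases)
    case greater
    then show ?thesis
      using orth[OF that(2,1)] by (simp add: mult.commute)
  qed (use orth[OF that] in \<open>simp_all add: power2_eq_square\<close>)
  have "(\<integral>\<omega>. (\<Sum>i\<in>I. Z i \<omega>)^2 \<partial>M) = (\<Sum>i\<in>I. \<Sum>j\<in>I. \<integral>\<omega>. Z i \<omega> * Z j \<omega> \<partial>M)"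
    unfolding square using int by (simp add: integral_sum integrable_sum)
  also have "\<dots> = (\<Sum>i\<in>I. \<integral>\<omega>. (Z i \<omega>)^2 \<partial>M)"
    using \<open>finite I\<close> by (simp add: diagonal sum.delta cong: sum.cong)
  finally show "(\<integral>\<omega>. (\<Sum>i\<in>I. Z i \<omega>)^2 \<partial>M) = (\<Sum>i\<in>I. \<integral>\<omega>. (Z i \<omega>)^2 \<partial>M)" .
qed

lemma square_sum_le_convex_combination:
  fixes x y l :: real
  assumes "0 < l" "l < 1"
  shows "(x + y)^2 \<le> x^2 / l + y^2 / (1 - l)"
proof -
  have "x^2 / l + y^2 / (1 - l) - (x + y)^2 = ((1 - l) * x - l * y)^2 / (l * (1 - l))"
    using assms by (simp add: field_simps power2_eq_square)
  also have "\<dots> \<ge> 0"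
    using assms by simp
  finally show ?thesis
    by simp
qed

lemma abs_mult_le_sum_squares: "\<bar>(a::real) * b\<bar> \<le> a^2 + b^2"
proof -
  have "2 * \<bar>a\<bar> * \<bar>b\<bar> \<le> a^2 + b^2"
    using sum_squares_bound[of "\<bar>a\<bar>" "\<bar>b\<bar>"] by simp
  moreover have "0 \<le> \<bar>a\<bar> * \<bar>b\<bar>"
    by simp
  ultimately have "\<bar>a\<bar> * \<bar>b\<bar> \<le> a^2 + b^2"
    by linarith
  then show ?thesis
    by (simp add: abs_mult)
qed

lemma measure_Un_le_add:
  assumes "A \<in> sets M" "B \<in> sets M" "measure M A \<le> a" "measure M B \<le> b"
  shows "measure M (A \<union> B) \<le> a + b"
  using measure_Un_le[OF assms(1,2)] assms(3,4) by linarith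

lemma (in prob_space) chebyshev_inequality:
  fixes Z :: "'a \<Rightarrow> real"
  assumes [measurable]: "Z \<in> borel_measurable M" and "integrable M (\<lambda>\<omega>. (Z \<omega>)^2)" and "c > 0"
  shows "measure M {\<omega>\<in>space M. c \<le> \<bar>Z \<omega>\<bar>} \<le> (\<integral>\<omega>. (Z \<omega>)^2 \<partial>M) / c^2"
proof -
  have "{\<omega>\<in>space M. c \<le> \<bar>Z \<omega>\<bar>} = {\<omega>\<in>space M. c^2 \<le> (Z \<omega>)^2}"
    using \<open>c > 0\<close> by (auto simp: abs_le_square_iff[symmetric])
  then show ?thesis
    using assms by (auto intro: integral_Markov_inequality_measure)
qed

section \<open>The bifurcating autoregressive model\<close>

text \<open>Innovation 0 carries the root value and innovation \<open>n \<ge> 1\<close> the noise pair of the children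
  of \<open>n\<close>; they are the independent variables of the model, and \<open>X\<^sub>i = bar_value \<dots> i v\<close> only reads
  the innovations \<open>v k\<close> with \<open>k < i\<close>.\<close>

definition innovation :: "(nat \<Rightarrow> 'a \<Rightarrow> real) \<Rightarrow> (nat \<Rightarrow> 'a \<Rightarrow> real) \<Rightarrow> nat \<Rightarrow> 'a \<Rightarrow> real \<times> real" where
  "innovation X eps n \<omega> = (if n = 0 then (X 1 \<omega>, 0) else (eps (2*n) \<omega>, eps (2*n+1) \<omega>))"

function bar_value :: "real \<Rightarrow> real \<Rightarrow> real \<Rightarrow> real \<Rightarrow> nat \<Rightarrow> (nat \<Rightarrow> real \<times> real) \<Rightarrow> real" where
  "bar_value a0 b0 a1 b1 i v =
     (if i \<le> 1 then fst (v 0)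
      else if even i then a0 * bar_value a0 b0 a1 b1 (i div 2) v + b0 + fst (v (i div 2))
      else a1 * bar_value a0 b0 a1 b1 (i div 2) v + b1 + snd (v (i div 2)))"
  by pat_completeness auto
termination
  by (relation "Wellfounded.measure (\<lambda>(_, _, _, _, i, _). i)") auto

declare bar_value.simps [simp del]

lemma bar_value_restrict:
  assumes "i \<le> j" "1 \<le> j"
  shows "bar_value a0 b0 a1 b1 i (restrict v {..<j}) = bar_value a0 b0 a1 b1 i v"
  using assms
proof (induction i rule: less_induct)
  case (less i)
  then show ?case
    by (subst (1 2) bar_value.simps) (auto simp: restrict_def)
qed

lemma bar_value_measurable:
  assumes "i \<le> j" "1 \<le> j"
  shows "bar_value a0 b0 a1 b1 i \<in> borel_measurable (Pi\<^sub>M {..<j} (\<lambda>_. lborel))"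
  using assms
proof (induction i rule: less_induct)
  case (less i)
  have coordinate: "(\<lambda>v. v k) \<in> measurable (Pi\<^sub>M {..<j} (\<lambda>_. lborel)) (borel :: (real \<times> real) measure)"
    if "k < j" for k
    using measurable_component_singleton[of k "{..<j}" "\<lambda>_. lborel"] that by simp
  show ?case
  proof (cases "i \<le> 1")
    case True
    then show ?thesis
      using measurable_compose[OF coordinate measurable_fst_real_pair, of 0] less.prems
      by (subst bar_value.simps[abs_def]) simp
  next
    case False
    then have "i div 2 < j" "i div 2 < i"
      using less.prems by auto
    then show ?thesis
      using less.IH[of "i div 2"] less.prems False
        measurable_compose[OF coordinate measurable_fst_real_pair, of "i div 2"]
        measurable_compose[OF coordinate measurable_snd_real_pair, of "i div 2"]
      by (subst bar_value.simps[abs_def]) (auto simp: o_def)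
  qed
qed

locale gaussian_bar = prob_space M for M :: "'a measure" +
  fixes X eps :: "nat \<Rightarrow> 'a \<Rightarrow> real" and a0 b0 a1 b1 \<sigma> \<rho> :: real
  assumes X_measurable [measurable]: "\<And>n. X n \<in> borel_measurable M"
    and eps_measurable [measurable]: "\<And>n. eps n \<in> borel_measurable M"
    and X1_moments: "\<And>k::nat. integrable M (\<lambda>\<omega>. (X 1 \<omega>) ^ k)"
    and a0: "\<bar>a0\<bar> < 1" and a1: "\<bar>a1\<bar> < 1"
    and \<sigma>: "\<sigma> > 0" and \<rho>: "\<bar>\<rho>\<bar> < 1"
    and recursion0: "\<And>n. n \<ge> 1 \<Longrightarrow> \<forall>\<omega>\<in>space M. X (2*n) \<omega> = a0 * X n \<omega> + b0 + eps (2*n) \<omega>"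
    and recursion1: "\<And>n. n \<ge> 1 \<Longrightarrow> \<forall>\<omega>\<in>space M. X (2*n+1) \<omega> = a1 * X n \<omega> + b1 + eps (2*n+1) \<omega>"
    and noise_distributed: "\<And>n. n \<ge> 1 \<Longrightarrow> distributed M lborel (\<lambda>\<omega>. (eps (2*n) \<omega>, eps (2*n+1) \<omega>))
                 (\<lambda>p. ennreal (binormal_density (\<sigma>^2) \<rho> p))"
    and innovations_indep: "indep_vars (\<lambda>_. lborel) (innovation X eps) UNIV"
begin

abbreviation "Y \<equiv> innovation X eps"

abbreviation "g \<equiv> binormal_density (\<sigma>^2) \<rho>"

definition history :: "nat \<Rightarrow> 'a \<Rightarrow> nat \<Rightarrow> real \<times> real" where
  "history j \<omega> = restrict (\<lambda>k. Y k \<omega>) {..<j}"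

lemma innovation_measurable [measurable]: "Y n \<in> borel_measurable M"
  using innovations_indep unfolding indep_vars_def by simp

lemma history_measurable [measurable]: "history j \<in> measurable M (Pi\<^sub>M {..<j} (\<lambda>_. lborel))"
  unfolding history_def by (intro measurable_restrict) simp

lemma X_eq_bar_value_history:
  assumes "1 \<le> i" "i \<le> j" "\<omega> \<in> space M"
  shows "X i \<omega> = bar_value a0 b0 a1 b1 i (history j \<omega>)"
proof -
  have "X i \<omega> = bar_value a0 b0 a1 b1 i (\<lambda>k. Y k \<omega>)" if "1 \<le> i" for i
    using that
  proof (induction i rule: less_induct)
    case (less i)
    show ?case
    proof (cases "i = 1")
      case True
      then show ?thesis
        by (subst bar_value.simps) (simp add: innovation_def)
    next
      case False
      then have n: "1 \<le> i div 2" "i div 2 < i" "\<not> i \<le> 1"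
        using less.prems by auto
      have IH: "X (i div 2) \<omega> = bar_value a0 b0 a1 b1 (i div 2) (\<lambda>k. Y k \<omega>)"
        using less.IH[OF n(2) n(1)] .
      show ?thesis
      proof (cases "even i")
        case True
        then have "i = 2 * (i div 2)"
          by simp
        then show ?thesis
          using recursion0[OF n(1)] \<open>\<omega> \<in> space M\<close> IH True n
          by (subst bar_value.simps) (simp add: innovation_def)
      next
        case odd: False
        then have "i = 2 * (i div 2) + 1"
          by simp
        then show ?thesis
          using recursion1[OF n(1)] \<open>\<omega> \<in> space M\<close> IH odd n
          by (subst bar_value.simps) (simp add: innovation_def)
      qed
    qed
  qed
  then show ?thesis
    using assms by (simp add: history_def bar_value_restrict)
qed

lemma history_indep_innovation:
  assumes "j \<ge> 1"
  shows "indep_var (Pi\<^sub>M {..<j} (\<lambda>_. lborel)) (history j) (Pi\<^sub>M {j} (\<lambda>_. lborel))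
           (\<lambda>\<omega>. restrict (\<lambda>i. Y i \<omega>) {j})"
  unfolding history_def by (rule indep_var_restrict[OF innovations_indep]) auto

lemma integral_history_mult_innovation:
  fixes f :: "(nat \<Rightarrow> real \<times> real) \<Rightarrow> real" and h :: "real \<times> real \<Rightarrow> real"
  assumes "j \<ge> 1"
    and [measurable]: "f \<in> borel_measurable (Pi\<^sub>M {..<j} (\<lambda>_. lborel))" "h \<in> borel_measurable borel"
    and "integrable M (\<lambda>\<omega>. f (history j \<omega>))" "integrable M (\<lambda>\<omega>. h (Y j \<omega>))"
  shows "integrable M (\<lambda>\<omega>. f (history j \<omega>) * h (Y j \<omega>))"
    and "(\<integral>\<omega>. f (history j \<omega>) * h (Y j \<omega>) \<partial>M) = (\<integral>\<omega>. f (history j \<omega>) \<partial>M) * (\<integral>\<omega>. h (Y j \<omega>) \<partial>M)"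
proof -
  have "(\<lambda>v. v j) \<in> measurable (Pi\<^sub>M {j} (\<lambda>_. lborel)) (borel :: (real \<times> real) measure)"
    using measurable_component_singleton[of j "{j}" "\<lambda>_. lborel"] by simp
  then have "(\<lambda>v. h (v j)) \<in> borel_measurable (Pi\<^sub>M {j} (\<lambda>_. lborel))"
    by measurable
  from indep_var_compose[OF history_indep_innovation[OF \<open>j \<ge> 1\<close>] _ this]
  have "indep_var borel (\<lambda>\<omega>. f (history j \<omega>)) borel (\<lambda>\<omega>. h (Y j \<omega>))"
    by (simp add: o_def)
  then show "integrable M (\<lambda>\<omega>. f (history j \<omega>) * h (Y j \<omega>))"
    and "(\<integral>\<omega>. f (history j \<omega>) * h (Y j \<omega>) \<partial>M) = (\<integral>\<omega>. f (history j \<omega>) \<partial>M) * (\<integral>\<omega>. h (Y j \<omega>) \<partial>M)"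
    using assms by (auto intro: indep_var_integrable indep_var_lebesgue_integral)
qed

definition noise_var :: "nat \<Rightarrow> real" where
  "noise_var \<eta> = (\<integral>p. g p * (pair_coord \<eta> p)^2 \<partial>lborel)"

definition truncated_moment :: real where
  "truncated_moment = (\<integral>p. g p * min ((fst p)^2) 1 \<partial>lborel)"

lemma binormal_nonneg: "0 \<le> g p"
  using binormal_density_pos[of "\<sigma>^2" \<rho> p] \<sigma> \<rho> by simp

lemma eps_eq_pair_coord: "n \<ge> 1 \<Longrightarrow> \<eta> \<le> 1 \<Longrightarrow> eps (2*n+\<eta>) \<omega> = pair_coord \<eta> (Y n \<omega>)"
  by (auto simp: pair_coord_def innovation_def le_Suc_eq)

lemma
  assumes "n \<ge> 1" and [measurable]: "h \<in> borel_measurable borel"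
  shows integrable_innovation_iff: "integrable M (\<lambda>\<omega>. h (Y n \<omega>)) \<longleftrightarrow> integrable lborel (\<lambda>p. g p * h p)"
    and integral_innovation: "(\<integral>\<omega>. h (Y n \<omega>) \<partial>M) = (\<integral>p. g p * h p \<partial>lborel)"
  using distributed_integrable[OF noise_distributed[OF \<open>n \<ge> 1\<close>], of h]
    distributed_integral[OF noise_distributed[OF \<open>n \<ge> 1\<close>], of h] binormal_nonneg \<open>n \<ge> 1\<close>
  by (simp_all add: innovation_def)

lemma
  assumes "n \<ge> 1"
  shows integrable_noise_square: "integrable M (\<lambda>\<omega>. (pair_coord \<eta> (Y n \<omega>))^2)"
    and integral_noise_square: "(\<integral>\<omega>. (pair_coord \<eta> (Y n \<omega>))^2 \<partial>M) = noise_var \<eta>"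
  using integrable_innovation_iff[OF assms, of "\<lambda>p. (pair_coord \<eta> p)^2"]
    integral_innovation[OF assms, of "\<lambda>p. (pair_coord \<eta> p)^2"]
    integrable_binormal_density_coord_sq[of "\<sigma>^2" \<rho> \<eta>] \<sigma> \<rho>
  by (simp_all add: noise_var_def)

lemma integral_noise: "n \<ge> 1 \<Longrightarrow> (\<integral>\<omega>. pair_coord \<eta> (Y n \<omega>) \<partial>M) = 0"
  using integral_innovation[of n "pair_coord \<eta>"] binormal_density_coord_mean_zero by simp

lemma noise_var_nonneg: "noise_var \<eta> \<ge> 0"
  using integral_noise_square[of 1 \<eta>] by (metis integral_nonneg_AE AE_I2 zero_le_power2 order_refl)

lemma truncated_moment_pos: "truncated_moment > 0"
  using binormal_density_truncated_moment_pos[of "\<sigma>^2" \<rho>] \<sigma> \<rho> by (simp add: truncated_moment_def)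

lemma truncated_moment_le_one: "truncated_moment \<le> 1"
proof -
  have "integrable M (\<lambda>\<omega>. min ((fst (Y 1 \<omega>))^2) 1)"
    by (rule Bochner_Integration.integrable_bound[of _ "\<lambda>_. 1::real"]) (auto intro!: AE_I2)
  then have "(\<integral>\<omega>. min ((fst (Y 1 \<omega>))^2) 1 \<partial>M) \<le> (\<integral>\<omega>. 1 \<partial>M)"
    by (rule integral_mono_AE) (auto intro!: AE_I2)
  then show ?thesis
    using integral_innovation[of 1 "\<lambda>p. min ((fst p)^2) 1"] by (simp add: truncated_moment_def prob_space)
qed

lemma second_moment_child_le:
  fixes a b l :: real
  assumes "n \<ge> 1" and child: "\<forall>\<omega>\<in>space M. X j \<omega> = a * X n \<omega> + b + pair_coord \<eta> (Y n \<omega>)"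
    and parent: "integrable M (\<lambda>\<omega>. (X n \<omega>)^2)" and l: "0 < l" "l < 1"
  shows "integrable M (\<lambda>\<omega>. (X j \<omega>)^2)"
    and "(\<integral>\<omega>. (X j \<omega>)^2 \<partial>M)
           \<le> a^2 / l * (\<integral>\<omega>. (X n \<omega>)^2 \<partial>M) + (2 * b^2 + 2 * noise_var \<eta>) / (1 - l)"
proof -
  define D where "D \<omega> = a^2 / l * (X n \<omega>)^2 + (2 * b^2 + 2 * (pair_coord \<eta> (Y n \<omega>))^2) / (1 - l)" for \<omega>
  have D: "integrable M D"
    unfolding D_def using parent integrable_noise_square[OF \<open>n \<ge> 1\<close>] by auto
  have bound: "(X j \<omega>)^2 \<le> D \<omega>" if "\<omega> \<in> space M" for \<omega>
  proof -
    have "(X j \<omega>)^2 \<le> (a * X n \<omega>)^2 / l + (b + pair_coord \<eta> (Y n \<omega>))^2 / (1 - l)"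
      using child that square_sum_le_convex_combination[OF l] by (simp add: add.assoc)
    moreover have "(b + pair_coord \<eta> (Y n \<omega>))^2 \<le> 2 * b^2 + 2 * (pair_coord \<eta> (Y n \<omega>))^2"
      by (smt (verit) sum_squares_bound power2_sum)
    then have "(b + pair_coord \<eta> (Y n \<omega>))^2 / (1 - l) \<le> (2 * b^2 + 2 * (pair_coord \<eta> (Y n \<omega>))^2) / (1 - l)"
      using l by (intro divide_right_mono) auto
    ultimately show ?thesis
      by (simp add: D_def power_mult_distrib)
  qed
  show int: "integrable M (\<lambda>\<omega>. (X j \<omega>)^2)"
  proof (rule Bochner_Integration.integrable_bound[OF D])
    show "AE \<omega> in M. norm ((X j \<omega>)^2) \<le> norm (D \<omega>)"
    proof (intro AE_I2)
      fix \<omega> assume "\<omega> \<in> space M"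
      then show "norm ((X j \<omega>)^2) \<le> norm (D \<omega>)"
        using bound[of \<omega>] abs_ge_self[of "D \<omega>"] by simp
    qed
  qed measurable
  have "(\<integral>\<omega>. (X j \<omega>)^2 \<partial>M) \<le> (\<integral>\<omega>. D \<omega> \<partial>M)"
    using bound by (intro integral_mono_AE int D AE_I2)
  also have "\<dots> = a^2 / l * (\<integral>\<omega>. (X n \<omega>)^2 \<partial>M) + (2 * b^2 + 2 * noise_var \<eta>) / (1 - l)"
    unfolding D_def using parent integrable_noise_square[OF \<open>n \<ge> 1\<close>] integral_noise_square[OF \<open>n \<ge> 1\<close>]
    by (simp add: prob_space)
  finally show "(\<integral>\<omega>. (X j \<omega>)^2 \<partial>M)
           \<le> a^2 / l * (\<integral>\<omega>. (X n \<omega>)^2 \<partial>M) + (2 * b^2 + 2 * noise_var \<eta>) / (1 - l)" .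
qed

lemma second_moment_le_of_invariant:
  fixes l C :: real
  assumes l: "0 < l" "l < 1" and root: "(\<integral>\<omega>. (X 1 \<omega>)^2 \<partial>M) \<le> C"
    and invariant: "\<And>a b \<eta>. (\<eta> = 0 \<and> a = a0 \<and> b = b0) \<or> (\<eta> = 1 \<and> a = a1 \<and> b = b1) \<Longrightarrow>
      a^2 / l * C + (2 * b^2 + 2 * noise_var \<eta>) / (1 - l) \<le> C"
  shows "i \<ge> 1 \<Longrightarrow> integrable M (\<lambda>\<omega>. (X i \<omega>)^2) \<and> (\<integral>\<omega>. (X i \<omega>)^2 \<partial>M) \<le> C"
proof (induction i rule: less_induct)
  case (less i)
  show ?case
  proof (cases "i = 1")
    case True
    then show ?thesis
      using X1_moments[of 2] root by simp
  next
    case False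
    define n where "n = i div 2"
    define \<eta> where "\<eta> = i mod 2"
    define a where "a = (if \<eta> = 0 then a0 else a1)"
    define b where "b = (if \<eta> = 0 then b0 else b1)"
    have n: "n \<ge> 1" "n < i"
      using False less.prems by (auto simp: n_def)
    have \<eta>: "\<eta> \<le> 1" and i: "i = 2 * n + \<eta>"
      by (simp_all add: n_def \<eta>_def)
    have child: "\<forall>\<omega>\<in>space M. X i \<omega> = a * X n \<omega> + b + pair_coord \<eta> (Y n \<omega>)"
      using recursion0[OF n(1)] recursion1[OF n(1)] eps_eq_pair_coord[OF n(1) \<eta>] \<eta>
      by (auto simp: i a_def b_def le_Suc_eq)
    have IH: "integrable M (\<lambda>\<omega>. (X n \<omega>)^2)" "(\<integral>\<omega>. (X n \<omega>)^2 \<partial>M) \<le> C"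
      using less.IH[OF n(2) n(1)] by auto
    have "a^2 / l * (\<integral>\<omega>. (X n \<omega>)^2 \<partial>M) \<le> a^2 / l * C"
      using IH(2) l by (intro mult_left_mono) auto
    also have "a^2 / l * C + (2 * b^2 + 2 * noise_var \<eta>) / (1 - l) \<le> C"
      using \<eta> by (intro invariant) (auto simp: a_def b_def le_Suc_eq)
    ultimately show ?thesis
      using second_moment_child_le[OF n(1) child IH(1) l] by auto
  qed
qed

text \<open>Since \<open>max \<bar>a\<^sub>0\<bar> \<bar>a\<^sub>1\<bar> < 1\<close>, the map \<open>m \<mapsto> a\<^sup>2/l m + B\<close> of \<open>second_moment_child_le\<close> is a
  contraction for \<open>l\<close> between \<open>max \<bar>a\<^sub>0\<bar> \<bar>a\<^sub>1\<bar>\<close> and 1, and large constants are invariant.\<close>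

lemma second_moment_bounded:
  obtains C where "C \<ge> 0" "\<And>i. i \<ge> 1 \<Longrightarrow> integrable M (\<lambda>\<omega>. (X i \<omega>)^2)"
    "\<And>i. i \<ge> 1 \<Longrightarrow> (\<integral>\<omega>. (X i \<omega>)^2 \<partial>M) \<le> C"
proof -
  define A where "A = max \<bar>a0\<bar> \<bar>a1\<bar>"
  define l where "l = (1 + A) / 2"
  define \<kappa> where "\<kappa> = A^2 / l"
  define B where "B = (2 * max (b0^2) (b1^2) + 2 * max (noise_var 0) (noise_var 1)) / (1 - l)"
  define C where "C = max (\<integral>\<omega>. (X 1 \<omega>)^2 \<partial>M) (B / (1 - \<kappa>))"
  have A: "0 \<le> A" "A < 1"
    using a0 a1 by (auto simp: A_def)
  then have l: "0 < l" "l < 1"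
    by (auto simp: l_def)
  have "A^2 \<le> A"
    using A by (simp add: power2_eq_square mult_left_le)
  then have \<kappa>: "0 \<le> \<kappa>" "\<kappa> < 1"
    using A l by (auto simp: \<kappa>_def l_def)
  have "0 \<le> B"
    using l noise_var_nonneg[of 0] unfolding B_def by (intro divide_nonneg_pos) (auto simp: le_max_iff_disj)
  then have C: "C \<ge> 0" "B / (1 - \<kappa>) \<le> C"
    using \<kappa> by (simp_all add: C_def le_max_iff_disj)
  have "a^2 / l * C + (2 * b^2 + 2 * noise_var \<eta>) / (1 - l) \<le> C"
    if "(\<eta> = 0 \<and> a = a0 \<and> b = b0) \<or> (\<eta> = 1 \<and> a = a1 \<and> b = b1)" for a b \<eta>
  proof -
    have "\<bar>a\<bar> \<le> A"
      using that by (auto simp: A_def)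
    then have "a^2 \<le> A^2"
      using power_mono[of "\<bar>a\<bar>" A 2] by simp
    then have "a^2 / l * C \<le> \<kappa> * C"
      using l C by (intro mult_right_mono) (simp_all add: \<kappa>_def divide_right_mono)
    moreover have "2 * b^2 + 2 * noise_var \<eta> \<le> 2 * max (b0^2) (b1^2) + 2 * max (noise_var 0) (noise_var 1)"
      using that by auto
    then have "(2 * b^2 + 2 * noise_var \<eta>) / (1 - l) \<le> B"
      using l unfolding B_def by (intro divide_right_mono) auto
    moreover have "\<kappa> * C + B \<le> C"
      using \<kappa> C(2) by (simp add: field_simps)
    ultimately show ?thesis
      by linarith
  qed
  then have "integrable M (\<lambda>\<omega>. (X i \<omega>)^2) \<and> (\<integral>\<omega>. (X i \<omega>)^2 \<partial>M) \<le> C" if "i \<ge> 1" for i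
    using second_moment_le_of_invariant[OF l, of C] that by (simp add: C_def)
  then show ?thesis
    using that C(1) by blast
qed

section \<open>Martingale-difference sums\<close>

lemma restrict_history: "i \<le> j \<Longrightarrow> restrict (history j \<omega>) {..<i} = history i \<omega>"
  by (auto simp: history_def restrict_def)

lemma history_apply: "i < j \<Longrightarrow> history j \<omega> i = Y i \<omega>"
  by (simp add: history_def)

lemma measurable_history_coordinate:
  "i < j \<Longrightarrow> (\<lambda>v. v i) \<in> measurable (Pi\<^sub>M {..<j} (\<lambda>_. lborel)) (borel :: (real \<times> real) measure)"
  using measurable_component_singleton[of i "{..<j}" "\<lambda>_. lborel"] by simp

text \<open>The summands \<open>A\<^sub>i(history) \<cdot> h(Y\<^sub>i)\<close> below form a martingale difference sequence: \<open>A\<^sub>i\<close>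
  only sees innovations before \<open>i\<close>, and \<open>h(Y\<^sub>i)\<close> is centred and independent of them.\<close>

lemma martingale_difference_square:
  fixes A :: "(nat \<Rightarrow> real \<times> real) \<Rightarrow> real" and h :: "real \<times> real \<Rightarrow> real"
  assumes "i \<ge> 1" and A: "A \<in> borel_measurable (Pi\<^sub>M {..<i} (\<lambda>_. lborel))"
    and h: "h \<in> borel_measurable borel"
    and square: "integrable M (\<lambda>\<omega>. (A (history i \<omega>))^2)" "integrable M (\<lambda>\<omega>. (h (Y i \<omega>))^2)"
    and bound: "(\<integral>\<omega>. (A (history i \<omega>))^2 \<partial>M) \<le> KA" "(\<integral>\<omega>. (h (Y i \<omega>))^2 \<partial>M) \<le> Kh"
  shows "integrable M (\<lambda>\<omega>. (A (history i \<omega>) * h (Y i \<omega>))^2)"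
    and "(\<integral>\<omega>. (A (history i \<omega>) * h (Y i \<omega>))^2 \<partial>M) \<le> KA * Kh"
proof -
  note product = integral_history_mult_innovation[OF \<open>i \<ge> 1\<close> borel_measurable_power[OF A]
      borel_measurable_power[OF h] square]
  show "integrable M (\<lambda>\<omega>. (A (history i \<omega>) * h (Y i \<omega>))^2)"
    using product(1) by (simp add: power_mult_distrib)
  have nonneg: "0 \<le> (\<integral>\<omega>. (A (history i \<omega>))^2 \<partial>M)" "0 \<le> (\<integral>\<omega>. (h (Y i \<omega>))^2 \<partial>M)"
    by (simp_all add: integral_nonneg_AE)
  have "(\<integral>\<omega>. (A (history i \<omega>))^2 \<partial>M) * (\<integral>\<omega>. (h (Y i \<omega>))^2 \<partial>M) \<le> KA * Kh"
    by (rule mult_mono[OF bound order_trans[OF nonneg(1) bound(1)] nonneg(2)])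
  then show "(\<integral>\<omega>. (A (history i \<omega>) * h (Y i \<omega>))^2 \<partial>M) \<le> KA * Kh"
    using product(2) by (simp add: power_mult_distrib)
qed

lemma martingale_difference_orthogonal:
  fixes A B :: "(nat \<Rightarrow> real \<times> real) \<Rightarrow> real" and h :: "real \<times> real \<Rightarrow> real"
  assumes "1 \<le> i" "i < j"
    and A: "A \<in> borel_measurable (Pi\<^sub>M {..<i} (\<lambda>_. lborel))"
    and B: "B \<in> borel_measurable (Pi\<^sub>M {..<j} (\<lambda>_. lborel))"
    and h: "h \<in> borel_measurable borel"
    and square: "integrable M (\<lambda>\<omega>. (A (history i \<omega>) * h (Y i \<omega>))^2)"
      "integrable M (\<lambda>\<omega>. (B (history j \<omega>))^2)" "integrable M (\<lambda>\<omega>. (h (Y j \<omega>))^2)"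
    and centred: "(\<integral>\<omega>. h (Y j \<omega>) \<partial>M) = 0"
  shows "integrable M (\<lambda>\<omega>. (A (history i \<omega>) * h (Y i \<omega>)) * (B (history j \<omega>) * h (Y j \<omega>)))"
    and "(\<integral>\<omega>. (A (history i \<omega>) * h (Y i \<omega>)) * (B (history j \<omega>) * h (Y j \<omega>)) \<partial>M) = 0"
proof -
  define f where "f v = A (restrict v {..<i}) * h (v i) * B v" for v
  have "(\<lambda>v. restrict v {..<i}) \<in> measurable (Pi\<^sub>M {..<j} (\<lambda>_. lborel)) (Pi\<^sub>M {..<i} (\<lambda>_. lborel))"
    using \<open>i < j\<close> by (intro measurable_restrict_subset) auto
  then have f_measurable: "f \<in> borel_measurable (Pi\<^sub>M {..<j} (\<lambda>_. lborel))"
    unfolding f_def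
    by (intro borel_measurable_times measurable_compose[OF _ A]
        measurable_compose[OF measurable_history_coordinate[OF \<open>i < j\<close>] h] B)
  have f_history: "f (history j \<omega>) = A (history i \<omega>) * h (Y i \<omega>) * B (history j \<omega>)" for \<omega>
    using assms by (simp add: f_def restrict_history history_apply)
  have sum_squares: "integrable M (\<lambda>\<omega>. (A (history i \<omega>) * h (Y i \<omega>))^2 + (B (history j \<omega>))^2)"
    using square(1,2) by (rule Bochner_Integration.integrable_add)
  have "integrable M (\<lambda>\<omega>. f (history j \<omega>))"
  proof (rule Bochner_Integration.integrable_bound[OF sum_squares])
    show "AE \<omega> in M. norm (f (history j \<omega>)) \<le> norm ((A (history i \<omega>) * h (Y i \<omega>))^2 + (B (history j \<omega>))^2)"
      using abs_mult_le_sum_squares by (intro AE_I2) (simp add: f_history)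
  qed (rule measurable_compose[OF history_measurable f_measurable])
  moreover have "integrable M (\<lambda>\<omega>. h (Y j \<omega>))"
    by (rule integrable_of_integrable_square[OF measurable_compose[OF innovation_measurable h] square(3)])
  moreover have "1 \<le> j"
    using assms by simp
  ultimately have "integrable M (\<lambda>\<omega>. f (history j \<omega>) * h (Y j \<omega>))"
    and "(\<integral>\<omega>. f (history j \<omega>) * h (Y j \<omega>) \<partial>M) = 0"
    using integral_history_mult_innovation[OF _ f_measurable h] centred by simp_all
  then show "integrable M (\<lambda>\<omega>. (A (history i \<omega>) * h (Y i \<omega>)) * (B (history j \<omega>) * h (Y j \<omega>)))"
    and "(\<integral>\<omega>. (A (history i \<omega>) * h (Y i \<omega>)) * (B (history j \<omega>) * h (Y j \<omega>)) \<partial>M) = 0"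
    by (simp_all add: f_history mult_ac)
qed

lemma martingale_difference_sum_deviation:
  fixes A :: "nat \<Rightarrow> (nat \<Rightarrow> real \<times> real) \<Rightarrow> real" and h :: "real \<times> real \<Rightarrow> real"
  assumes I: "finite I" "\<And>i. i \<in> I \<Longrightarrow> i \<ge> 1" and "c > 0"
    and A: "\<And>i. i \<in> I \<Longrightarrow> A i \<in> borel_measurable (Pi\<^sub>M {..<i} (\<lambda>_. lborel))"
      "\<And>i. i \<in> I \<Longrightarrow> integrable M (\<lambda>\<omega>. (A i (history i \<omega>))^2)"
      "\<And>i. i \<in> I \<Longrightarrow> (\<integral>\<omega>. (A i (history i \<omega>))^2 \<partial>M) \<le> KA"
    and h: "h \<in> borel_measurable borel"
      "\<And>i. i \<in> I \<Longrightarrow> integrable M (\<lambda>\<omega>. (h (Y i \<omega>))^2)"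
      "\<And>i. i \<in> I \<Longrightarrow> (\<integral>\<omega>. (h (Y i \<omega>))^2 \<partial>M) \<le> Kh"
      "\<And>i. i \<in> I \<Longrightarrow> (\<integral>\<omega>. h (Y i \<omega>) \<partial>M) = 0"
  shows "measure M {\<omega>\<in>space M. c \<le> \<bar>\<Sum>i\<in>I. A i (history i \<omega>) * h (Y i \<omega>)\<bar>}
           \<le> real (card I) * (KA * Kh) / c^2"
proof -
  define Z where "Z i \<omega> = A i (history i \<omega>) * h (Y i \<omega>)" for i \<omega>
  have square: "integrable M (\<lambda>\<omega>. (Z i \<omega>)^2)" "(\<integral>\<omega>. (Z i \<omega>)^2 \<partial>M) \<le> KA * Kh" if "i \<in> I" for i
    using martingale_difference_square[OF I(2) A(1) h(1) A(2) h(2) A(3) h(3)] that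
    by (simp_all add: Z_def)
  have orthogonal: "integrable M (\<lambda>\<omega>. Z i \<omega> * Z j \<omega>) \<and> (\<integral>\<omega>. Z i \<omega> * Z j \<omega> \<partial>M) = 0"
    if "i \<in> I" "j \<in> I" "i < j" for i j
    using martingale_difference_orthogonal[OF I(2)[OF that(1)] that(3) A(1)[OF that(1)] A(1)[OF that(2)] h(1)
        square(1)[OF that(1), unfolded Z_def] A(2)[OF that(2)] h(2)[OF that(2)] h(4)[OF that(2)]]
    by (simp add: Z_def)
  have products: "integrable M (\<lambda>\<omega>. Z i \<omega> * Z j \<omega>)" if "i \<in> I" "j \<in> I" for i j
  proof (cases i j rule: linorder_cases)
    case less
    then show ?thesis
      using orthogonal that by blast
  next
    case equal
    then show ?thesis
      using square(1)[OF that(1)] by (simp add: power2_eq_square)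
  next
    case greater
    then show ?thesis
      using orthogonal[OF that(2,1)] by (simp add: mult.commute)
  qed
  have "(\<integral>\<omega>. Z i \<omega> * Z j \<omega> \<partial>M) = 0" if "i \<in> I" "j \<in> I" "i < j" for i j
    using orthogonal[OF that] by blast
  note sum_square = integral_square_sum_orthogonal[OF I(1) products this]
  have "Z i \<in> borel_measurable M" if "i \<in> I" for i
    unfolding Z_def
    by (intro borel_measurable_times measurable_compose[OF history_measurable A(1)[OF that]]
        measurable_compose[OF innovation_measurable h(1)])
  then have "(\<lambda>\<omega>. \<Sum>i\<in>I. Z i \<omega>) \<in> borel_measurable M"
    by (rule borel_measurable_sum)
  then have "measure M {\<omega>\<in>space M. c \<le> \<bar>\<Sum>i\<in>I. Z i \<omega>\<bar>} \<le> (\<integral>\<omega>. (\<Sum>i\<in>I. Z i \<omega>)^2 \<partial>M) / c^2"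
    by (rule chebyshev_inequality[OF _ sum_square(1) \<open>c > 0\<close>])
  also have "\<dots> = (\<Sum>i\<in>I. \<integral>\<omega>. (Z i \<omega>)^2 \<partial>M) / c^2"
    by (simp add: sum_square(2))
  also have "\<dots> \<le> real (card I) * (KA * Kh) / c^2"
    using square(2) sum_mono[of I "\<lambda>i. \<integral>\<omega>. (Z i \<omega>)^2 \<partial>M" "\<lambda>_. KA * Kh"]
    by (simp add: divide_right_mono)
  finally show ?thesis
    by (simp add: Z_def)
qed

lemma measure_noise_sum_ge:
  assumes "finite I" "I \<subseteq> {1..}" "c > 0" "\<eta> \<le> 1"
  shows "measure M {\<omega>\<in>space M. c \<le> \<bar>\<Sum>i\<in>I. eps (2*i+\<eta>) \<omega>\<bar>} \<le> real (card I) * noise_var \<eta> / c^2"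
proof -
  have "(\<Sum>i\<in>I. eps (2*i+\<eta>) \<omega>) = (\<Sum>i\<in>I. (\<lambda>_. 1) (history i \<omega>) * pair_coord \<eta> (Y i \<omega>))" for \<omega>
    using assms eps_eq_pair_coord by (intro sum.cong) auto
  moreover have "measure M {\<omega>\<in>space M. c \<le> \<bar>\<Sum>i\<in>I. (\<lambda>_. 1) (history i \<omega>) * pair_coord \<eta> (Y i \<omega>)\<bar>}
      \<le> real (card I) * (1 * noise_var \<eta>) / c^2"
    using assms by (intro martingale_difference_sum_deviation)
      (auto simp: integrable_noise_square integral_noise_square integral_noise prob_space)
  ultimately show ?thesis
    by simp
qed

lemma measure_weighted_noise_sum_ge:
  assumes "finite I" "I \<subseteq> {1..}" "c > 0" "\<eta> \<le> 1"
    and moments: "\<And>i. i \<ge> 1 \<Longrightarrow> integrable M (\<lambda>\<omega>. (X i \<omega>)^2)" "\<And>i. i \<ge> 1 \<Longrightarrow> (\<integral>\<omega>. (X i \<omega>)^2 \<partial>M) \<le> C"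
  shows "measure M {\<omega>\<in>space M. c \<le> \<bar>\<Sum>i\<in>I. X i \<omega> * eps (2*i+\<eta>) \<omega>\<bar>}
           \<le> real (card I) * (C * noise_var \<eta>) / c^2"
proof -
  have I: "\<And>i. i \<in> I \<Longrightarrow> i \<ge> 1"
    using assms(2) by auto
  let ?A = "bar_value a0 b0 a1 b1"
  have X: "X i \<omega> = ?A i (history i \<omega>)" if "i \<ge> 1" "\<omega> \<in> space M" for i \<omega>
    using X_eq_bar_value_history[of i i \<omega>] that by simp
  have "(\<Sum>i\<in>I. X i \<omega> * eps (2*i+\<eta>) \<omega>) = (\<Sum>i\<in>I. ?A i (history i \<omega>) * pair_coord \<eta> (Y i \<omega>))"
    if "\<omega> \<in> space M" for \<omega>
    using I assms(4) X that eps_eq_pair_coord by (intro sum.cong) simp_all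
  then have "{\<omega>\<in>space M. c \<le> \<bar>\<Sum>i\<in>I. X i \<omega> * eps (2*i+\<eta>) \<omega>\<bar>}
      = {\<omega>\<in>space M. c \<le> \<bar>\<Sum>i\<in>I. ?A i (history i \<omega>) * pair_coord \<eta> (Y i \<omega>)\<bar>}"
    by auto
  also have "measure M \<dots> \<le> real (card I) * (C * noise_var \<eta>) / c^2"
  proof (rule martingale_difference_sum_deviation[OF assms(1) I assms(3)])
    fix i assume "i \<in> I"
    then have i: "i \<ge> 1"
      by (rule I)
    have X2: "(X i \<omega>)^2 = (?A i (history i \<omega>))^2" if "\<omega> \<in> space M" for \<omega>
      using X[OF i that] by simp
    show "?A i \<in> borel_measurable (Pi\<^sub>M {..<i} (\<lambda>_. lborel))"
      using bar_value_measurable[of i i] i by simp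
    show "integrable M (\<lambda>\<omega>. (?A i (history i \<omega>))^2)"
      using moments(1)[OF i] X2 by (simp cong: Bochner_Integration.integrable_cong)
    show "(\<integral>\<omega>. (?A i (history i \<omega>))^2 \<partial>M) \<le> C"
      using moments(2)[OF i] X2 by (simp cong: Bochner_Integration.integral_cong)
    show "integrable M (\<lambda>\<omega>. (pair_coord \<eta> (Y i \<omega>))^2)"
      using i by (rule integrable_noise_square)
    show "(\<integral>\<omega>. (pair_coord \<eta> (Y i \<omega>))^2 \<partial>M) \<le> noise_var \<eta>"
      using i by (simp add: integral_noise_square)
    show "(\<integral>\<omega>. pair_coord \<eta> (Y i \<omega>) \<partial>M) = 0"
      using i by (rule integral_noise)
  qed (simp_all add: pair_coord_measurable)
  finally show ?thesis .
qed

lemma measure_truncated_noise_deviation: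
  assumes "finite I" "I \<subseteq> {1..}" "c > 0"
  shows "measure M {\<omega>\<in>space M. c \<le> \<bar>\<Sum>i\<in>I. min ((eps (2*i) \<omega>)^2) 1 - truncated_moment\<bar>}
           \<le> real (card I) / c^2"
proof -
  have I: "\<And>i. i \<in> I \<Longrightarrow> i \<ge> 1"
    using assms(2) by auto
  define h where "h p = min ((fst p)^2) 1 - truncated_moment" for p :: "real \<times> real"
  have "\<bar>h p\<bar> \<le> 1" for p
  proof -
    have "0 \<le> min ((fst p)^2) 1" "min ((fst p)^2) 1 \<le> 1"
      by simp_all
    then show ?thesis
      unfolding h_def abs_le_iff using truncated_moment_pos truncated_moment_le_one by linarith
  qed
  then have h_bound: "(h p)^2 \<le> 1" for p
    using abs_le_square_iff[of "h p" 1] by simp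
  have "(\<Sum>i\<in>I. min ((eps (2*i) \<omega>)^2) 1 - truncated_moment) = (\<Sum>i\<in>I. (\<lambda>_. 1) (history i \<omega>) * h (Y i \<omega>))"
    for \<omega>
    using I by (intro sum.cong) (auto simp: h_def innovation_def)
  then have "{\<omega>\<in>space M. c \<le> \<bar>\<Sum>i\<in>I. min ((eps (2*i) \<omega>)^2) 1 - truncated_moment\<bar>}
      = {\<omega>\<in>space M. c \<le> \<bar>\<Sum>i\<in>I. (\<lambda>_. 1) (history i \<omega>) * h (Y i \<omega>)\<bar>}"
    by simp
  also have "measure M \<dots> \<le> real (card I) * (1 * 1) / c^2"
  proof (rule martingale_difference_sum_deviation[OF assms(1) I assms(3)])
    show h_measurable: "h \<in> borel_measurable borel"
      unfolding h_def by measurable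
    fix i assume "i \<in> I"
    then have i: "i \<ge> 1"
      by (rule I)
    show "(\<lambda>_. 1) \<in> borel_measurable (Pi\<^sub>M {..<i} (\<lambda>_. lborel))"
      by simp
    show "integrable M (\<lambda>\<omega>. ((\<lambda>_. 1::real) (history i \<omega>))^2)"
      "(\<integral>\<omega>. ((\<lambda>_. 1::real) (history i \<omega>))^2 \<partial>M) \<le> 1"
      by (simp_all add: prob_space)
    have truncated_integrable: "integrable M (\<lambda>\<omega>. min ((fst (Y i \<omega>))^2) 1)"
      by (rule Bochner_Integration.integrable_bound[of _ "\<lambda>_. 1::real"]) (auto intro!: AE_I2)
    have "(\<lambda>\<omega>. h (Y i \<omega>)) \<in> borel_measurable M"
      by (rule measurable_compose[OF innovation_measurable h_measurable])
    then have "(\<lambda>\<omega>. (h (Y i \<omega>))^2) \<in> borel_measurable M"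
      by (rule borel_measurable_power)
    moreover have "AE \<omega> in M. norm ((h (Y i \<omega>))^2) \<le> norm (1::real)"
      using h_bound by (intro AE_I2) simp
    ultimately show square: "integrable M (\<lambda>\<omega>. (h (Y i \<omega>))^2)"
      by (rule Bochner_Integration.integrable_bound[OF integrable_const])
    have "(\<integral>\<omega>. (h (Y i \<omega>))^2 \<partial>M) \<le> (\<integral>\<omega>. 1 \<partial>M)"
      using h_bound by (intro integral_mono[OF square integrable_const])
    then show "(\<integral>\<omega>. (h (Y i \<omega>))^2 \<partial>M) \<le> 1"
      by (simp add: prob_space)
    show "(\<integral>\<omega>. h (Y i \<omega>) \<partial>M) = 0"
      using integral_innovation[OF i, of "\<lambda>p. min ((fst p)^2) 1"] truncated_integrable
      by (simp add: h_def truncated_moment_def prob_space)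
  qed
  finally show ?thesis
    by simp
qed

lemma measure_sum_ge:
  assumes "finite I" "I \<subseteq> {1..}" "c > 0"
    and moments: "\<And>i. i \<ge> 1 \<Longrightarrow> integrable M (\<lambda>\<omega>. (X i \<omega>)^2)" "\<And>i. i \<ge> 1 \<Longrightarrow> (\<integral>\<omega>. (X i \<omega>)^2 \<partial>M) \<le> C"
  shows "measure M {\<omega>\<in>space M. c \<le> \<bar>\<Sum>i\<in>I. X i \<omega>\<bar>} \<le> real (card I) * (1 + C) / c"
proof -
  have I: "\<And>i. i \<in> I \<Longrightarrow> i \<ge> 1"
    using assms(2) by auto
  have abs_X: "integrable M (\<lambda>\<omega>. \<bar>X i \<omega>\<bar>)" "(\<integral>\<omega>. \<bar>X i \<omega>\<bar> \<partial>M) \<le> 1 + C" if "i \<in> I" for i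
  proof -
    have i: "i \<ge> 1"
      using that by (rule I)
    have "integrable M (X i)"
      by (rule integrable_of_integrable_square[OF X_measurable moments(1)[OF i]])
    then show abs_int: "integrable M (\<lambda>\<omega>. \<bar>X i \<omega>\<bar>)"
      by (rule integrable_abs)
    have "(\<integral>\<omega>. \<bar>X i \<omega>\<bar> \<partial>M) \<le> (\<integral>\<omega>. 1 + (X i \<omega>)^2 \<partial>M)"
      using abs_int moments(1)[OF i] abs_le_one_plus_square by (intro integral_mono) simp_all
    also have "\<dots> \<le> 1 + C"
      using moments[OF i] by (simp add: prob_space)
    finally show "(\<integral>\<omega>. \<bar>X i \<omega>\<bar> \<partial>M) \<le> 1 + C" .
  qed
  have sum_integrable: "integrable M (\<lambda>\<omega>. \<Sum>i\<in>I. \<bar>X i \<omega>\<bar>)"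
    using abs_X(1) by (rule Bochner_Integration.integrable_sum)
  have "measure M {\<omega>\<in>space M. c \<le> \<bar>\<Sum>i\<in>I. X i \<omega>\<bar>} \<le> measure M {\<omega>\<in>space M. c \<le> (\<Sum>i\<in>I. \<bar>X i \<omega>\<bar>)}"
  proof (rule finite_measure_mono)
    show "{\<omega>\<in>space M. c \<le> \<bar>\<Sum>i\<in>I. X i \<omega>\<bar>} \<subseteq> {\<omega>\<in>space M. c \<le> (\<Sum>i\<in>I. \<bar>X i \<omega>\<bar>)}"
      using sum_abs[of "\<lambda>i. X i _" I] by (blast intro: order_trans)
    show "{\<omega>\<in>space M. c \<le> (\<Sum>i\<in>I. \<bar>X i \<omega>\<bar>)} \<in> sets M"
      by measurable
  qed
  also have "\<dots> \<le> (\<integral>\<omega>. (\<Sum>i\<in>I. \<bar>X i \<omega>\<bar>) \<partial>M) / c"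
    by (rule integral_Markov_inequality_measure[OF sum_integrable sets.top _ \<open>c > 0\<close>])
      (auto intro!: AE_I2 sum_nonneg)
  also have "(\<integral>\<omega>. (\<Sum>i\<in>I. \<bar>X i \<omega>\<bar>) \<partial>M) = (\<Sum>i\<in>I. \<integral>\<omega>. \<bar>X i \<omega>\<bar> \<partial>M)"
    using abs_X(1) by (rule Bochner_Integration.integral_sum)
  also have "(\<Sum>i\<in>I. \<integral>\<omega>. \<bar>X i \<omega>\<bar> \<partial>M) \<le> real (card I) * (1 + C)"
    using abs_X(2) sum_mono[of I "\<lambda>i. \<integral>\<omega>. \<bar>X i \<omega>\<bar> \<partial>M" "\<lambda>_. 1 + C"] by simp
  finally show ?thesis
    using \<open>c > 0\<close> by (simp add: divide_right_mono)
qed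

section \<open>Probability of a large estimation error\<close>

lemma error_le_of_small_sums:
  fixes q \<delta> :: real and k :: nat
  defines "u \<equiv> 1 / q^3" and "n \<equiv> real (card (Tset (k+1)))" and "n' \<equiv> real (card (Tset k))"
  defines "\<mu> \<equiv> truncated_moment"
  assumes "\<omega> \<in> space M" and q: "q \<ge> 1" "q \<ge> (16 + 8 * \<bar>b0\<bar>) / \<mu>" "q \<ge> (96 / \<mu> + 2) / \<delta>"
    and \<delta>: "\<delta> > 0"
    and E0: "\<bar>\<Sum>i\<in>Tset (k+1). eps (2*i) \<omega>\<bar> < u * n" and E1: "\<bar>\<Sum>i\<in>Tset (k+1). eps (2*i+1) \<omega>\<bar> < u * n"
    and P0: "\<bar>\<Sum>i\<in>Tset (k+1). X i \<omega> * eps (2*i) \<omega>\<bar> < u * n"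
    and P1: "\<bar>\<Sum>i\<in>Tset (k+1). X i \<omega> * eps (2*i+1) \<omega>\<bar> < u * n"
    and S: "\<bar>\<Sum>i\<in>Tset (k+1). X i \<omega>\<bar> < q * n"
    and E0': "\<bar>\<Sum>i\<in>Tset k. eps (2*i) \<omega>\<bar> < u * n'" and P0': "\<bar>\<Sum>i\<in>Tset k. X i \<omega> * eps (2*i) \<omega>\<bar> < u * n'"
    and truncated: "\<bar>\<Sum>i\<in>Tset k. min ((eps (2*i) \<omega>)^2) 1 - \<mu>\<bar> < \<mu> / 2 * n'"
  shows "norm (hat_theta (k+1) (\<lambda>i. X i \<omega>) - (a0, b0, a1, b1)) \<le> \<delta>"
proof -
  have \<mu>: "\<mu> > 0"
    using truncated_moment_pos by (simp add: \<mu>_def)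
  have d0: "X (2*i) \<omega> - a0 * X i \<omega> - b0 = eps (2*i) \<omega>"
    and d1: "X (2*i+1) \<omega> - a1 * X i \<omega> - b1 = eps (2*i+1) \<omega>" if "i \<in> Tset r" for i r
    using recursion0[OF Tset_ge_one[OF that]] recursion1[OF Tset_ge_one[OF that]] \<open>\<omega> \<in> space M\<close> by simp_all
  have sums:
    "(\<Sum>i\<in>Tset (k+1). X (2*i) \<omega> - a0 * X i \<omega> - b0) = (\<Sum>i\<in>Tset (k+1). eps (2*i) \<omega>)"
    "(\<Sum>i\<in>Tset (k+1). X (2*i+1) \<omega> - a1 * X i \<omega> - b1) = (\<Sum>i\<in>Tset (k+1). eps (2*i+1) \<omega>)"
    "(\<Sum>i\<in>Tset (k+1). X i \<omega> * (X (2*i) \<omega> - a0 * X i \<omega> - b0))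
       = (\<Sum>i\<in>Tset (k+1). X i \<omega> * eps (2*i) \<omega>)"
    "(\<Sum>i\<in>Tset (k+1). X i \<omega> * (X (2*i+1) \<omega> - a1 * X i \<omega> - b1))
       = (\<Sum>i\<in>Tset (k+1). X i \<omega> * eps (2*i+1) \<omega>)"
    "(\<Sum>i\<in>Tset k. X (2*i) \<omega> - a0 * X i \<omega> - b0) = (\<Sum>i\<in>Tset k. eps (2*i) \<omega>)"
    "(\<Sum>i\<in>Tset k. X i \<omega> * (X (2*i) \<omega> - a0 * X i \<omega> - b0)) = (\<Sum>i\<in>Tset k. X i \<omega> * eps (2*i) \<omega>)"
    "(\<Sum>i\<in>Tset k. min ((X (2*i) \<omega> - a0 * X i \<omega> - b0)^2) 1) = (\<Sum>i\<in>Tset k. min ((eps (2*i) \<omega>)^2) 1)"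
    by (rule sum.cong[OF refl], simp only: d0 d1)+
  have "(\<Sum>i\<in>Tset k. min ((eps (2*i) \<omega>)^2) 1 - \<mu>) = (\<Sum>i\<in>Tset k. min ((eps (2*i) \<omega>)^2) 1) - n' * \<mu>"
    by (simp add: sum_subtractf n'_def)
  then have "(\<Sum>i\<in>Tset k. min ((eps (2*i) \<omega>)^2) 1) > n' * \<mu> / 2"
    using truncated by (simp add: abs_less_iff field_simps)
  moreover have "2 * u + 2 * (\<bar>b0\<bar> + q) * u \<le> \<mu> / 4"
  proof -
    have "(16 + 8 * \<bar>b0\<bar>) \<le> q * \<mu>"
      using q(2) \<mu> by (simp add: divide_le_eq)
    then have "(4 + 2 * \<bar>b0\<bar>) / q \<le> \<mu> / 4"
      using q(1) \<mu> by (simp add: divide_le_eq field_simps)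
    then show ?thesis
      unfolding u_def by (rule order_trans[OF inverse_cube_drift_le[OF q(1)]])
  qed
  ultimately have "norm (hat_theta (k+1) (\<lambda>i. X i \<omega>) - (a0, b0, a1, b1))
      \<le> 2 * ((u + q * u) / (\<mu> / 12)) + 2 * (u + q * ((u + q * u) / (\<mu> / 12)))"
    using hat_theta_error_le[where x="\<lambda>i. X i \<omega>" and k=k and ?a0.0=a0 and ?b0.0=b0 and ?a1.0=a1 and ?b1.0=b1
        and u=u and L=q and \<mu>=\<mu>, unfolded sums] a0 \<mu> q(1) E0 E1 P0 P1 S E0' P0'
    by (simp add: u_def n_def n'_def)
  also have "\<dots> \<le> (96 / \<mu> + 2) / q"
    using inverse_cube_error_bound_le[OF q(1) \<mu>] by (simp add: u_def)
  also have "\<dots> \<le> \<delta>"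
    using q \<delta> by (simp add: divide_le_eq mult.commute)
  finally show ?thesis .
qed

lemma measure_sum_deviations_le:
  fixes q C :: real and I :: "nat set"
  defines "u \<equiv> 1 / q^3" and "m \<equiv> real (card I)" and "\<mu> \<equiv> truncated_moment"
  assumes I: "finite I" "I \<subseteq> {1..}" and q: "q \<ge> 1" "q^8 \<le> m" and C: "C \<ge> 0"
    and moments: "\<And>i. i \<ge> 1 \<Longrightarrow> integrable M (\<lambda>\<omega>. (X i \<omega>)^2)" "\<And>i. i \<ge> 1 \<Longrightarrow> (\<integral>\<omega>. (X i \<omega>)^2 \<partial>M) \<le> C"
    and \<eta>: "\<eta> \<le> 1"
  shows "measure M {\<omega>\<in>space M. u * m \<le> \<bar>\<Sum>i\<in>I. eps (2*i+\<eta>) \<omega>\<bar>} \<le> noise_var \<eta> / q"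
    and "measure M {\<omega>\<in>space M. u * m \<le> \<bar>\<Sum>i\<in>I. X i \<omega> * eps (2*i+\<eta>) \<omega>\<bar>} \<le> C * noise_var \<eta> / q"
    and "measure M {\<omega>\<in>space M. q * m \<le> \<bar>\<Sum>i\<in>I. X i \<omega>\<bar>} \<le> (1 + C) / q"
    and "measure M {\<omega>\<in>space M. \<mu> / 2 * m \<le> \<bar>\<Sum>i\<in>I. min ((eps (2*i) \<omega>)^2) 1 - \<mu>\<bar>} \<le> 4 / \<mu>^2 / q"
proof -
  have q0: "q > 0" and u: "u > 0" and \<mu>: "\<mu> > 0" and m: "m > 0"
    using q truncated_moment_pos by (simp_all add: u_def \<mu>_def) (smt (verit) zero_less_power)
  have rate: "x \<le> K / q" if "x \<le> m * K / (u * m)^2" "K \<ge> 0" for x K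
    using that(1) chebyshev_rate_le[OF q that(2)] unfolding u_def by linarith
  show "measure M {\<omega>\<in>space M. u * m \<le> \<bar>\<Sum>i\<in>I. eps (2*i+\<eta>) \<omega>\<bar>} \<le> noise_var \<eta> / q"
    using measure_noise_sum_ge[OF I, of "u * m" \<eta>] u m \<eta>
    by (intro rate noise_var_nonneg) (simp add: m_def)
  show "measure M {\<omega>\<in>space M. u * m \<le> \<bar>\<Sum>i\<in>I. X i \<omega> * eps (2*i+\<eta>) \<omega>\<bar>} \<le> C * noise_var \<eta> / q"
    using measure_weighted_noise_sum_ge[OF I _ \<eta> moments, of "u * m"] u m C noise_var_nonneg[of \<eta>]
    by (intro rate mult_nonneg_nonneg) (simp_all add: m_def)
  have "measure M {\<omega>\<in>space M. q * m \<le> \<bar>\<Sum>i\<in>I. X i \<omega>\<bar>} \<le> m * (1 + C) / (q * m)"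
    using measure_sum_ge[OF I _ moments, of "q * m"] q0 m by (simp add: m_def)
  then show "measure M {\<omega>\<in>space M. q * m \<le> \<bar>\<Sum>i\<in>I. X i \<omega>\<bar>} \<le> (1 + C) / q"
    using m by simp
  have "measure M {\<omega>\<in>space M. \<mu> / 2 * m \<le> \<bar>\<Sum>i\<in>I. min ((eps (2*i) \<omega>)^2) 1 - \<mu>\<bar>} \<le> m / (\<mu> / 2 * m)^2"
    using measure_truncated_noise_deviation[OF I, of "\<mu> / 2 * m"] \<mu> m by (simp add: m_def \<mu>_def)
  also have "\<dots> = 4 / \<mu>^2 / m"
    using m \<mu> by (simp add: field_simps power2_eq_square)
  also have "\<dots> \<le> 4 / \<mu>^2 / q"
    using q m \<mu> power_increasing[of 1 8 q] by (intro divide_left_mono) auto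
  finally show "measure M {\<omega>\<in>space M. \<mu> / 2 * m \<le> \<bar>\<Sum>i\<in>I. min ((eps (2*i) \<omega>)^2) 1 - \<mu>\<bar>} \<le> 4 / \<mu>^2 / q" .
qed

lemma measure_large_error_le:
  fixes q \<delta> C :: real and k :: nat
  defines "\<mu> \<equiv> truncated_moment"
  defines "D \<equiv> 2 * noise_var 0 + noise_var 1 + C * (2 * noise_var 0 + noise_var 1) + (1 + C) + 4 / \<mu>^2"
  assumes moments: "\<And>i. i \<ge> 1 \<Longrightarrow> integrable M (\<lambda>\<omega>. (X i \<omega>)^2)" "\<And>i. i \<ge> 1 \<Longrightarrow> (\<integral>\<omega>. (X i \<omega>)^2 \<partial>M) \<le> C"
    and C: "C \<ge> 0" and \<delta>: "\<delta> > 0"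
    and q: "q \<ge> 1" "q \<ge> (16 + 8 * \<bar>b0\<bar>) / \<mu>" "q \<ge> (96 / \<mu> + 2) / \<delta>"
    and q8: "q^8 \<le> real (card (Tset k))"
  shows "measure M {\<omega>\<in>space M. norm (hat_theta (k+1) (\<lambda>i. X i \<omega>) - (a0, b0, a1, b1)) > \<delta>} \<le> D / q"
proof -
  define u where "u = 1 / q^3"
  define n where "n = real (card (Tset (k+1)))"
  define n' where "n' = real (card (Tset k))"
  have n: "q^8 \<le> n"
    using q8 card_Tset_Suc[of k] by (simp add: n_def)
  note deviations = measure_sum_deviations_le[OF finite_Tset Tset_subset_atLeast_one q(1) _ C moments,
      folded u_def \<mu>_def]
  define B1 where "B1 = {\<omega>\<in>space M. u * n \<le> \<bar>\<Sum>i\<in>Tset (k+1). eps (2*i+0) \<omega>\<bar>}"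
  define B2 where "B2 = {\<omega>\<in>space M. u * n \<le> \<bar>\<Sum>i\<in>Tset (k+1). eps (2*i+1) \<omega>\<bar>}"
  define B3 where "B3 = {\<omega>\<in>space M. u * n \<le> \<bar>\<Sum>i\<in>Tset (k+1). X i \<omega> * eps (2*i+0) \<omega>\<bar>}"
  define B4 where "B4 = {\<omega>\<in>space M. u * n \<le> \<bar>\<Sum>i\<in>Tset (k+1). X i \<omega> * eps (2*i+1) \<omega>\<bar>}"
  define B5 where "B5 = {\<omega>\<in>space M. q * n \<le> \<bar>\<Sum>i\<in>Tset (k+1). X i \<omega>\<bar>}"
  define B6 where "B6 = {\<omega>\<in>space M. u * n' \<le> \<bar>\<Sum>i\<in>Tset k. eps (2*i+0) \<omega>\<bar>}"
  define B7 where "B7 = {\<omega>\<in>space M. u * n' \<le> \<bar>\<Sum>i\<in>Tset k. X i \<omega> * eps (2*i+0) \<omega>\<bar>}"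
  define B8 where "B8 = {\<omega>\<in>space M. \<mu> / 2 * n' \<le> \<bar>\<Sum>i\<in>Tset k. min ((eps (2*i) \<omega>)^2) 1 - \<mu>\<bar>}"
  have "{\<omega>\<in>space M. norm (hat_theta (k+1) (\<lambda>i. X i \<omega>) - (a0, b0, a1, b1)) > \<delta>}
      \<subseteq> B1 \<union> B2 \<union> B3 \<union> B4 \<union> B5 \<union> B6 \<union> B7 \<union> B8"
  proof (rule subsetI, rule ccontr)
    fix \<omega>
    assume large: "\<omega> \<in> {\<omega>\<in>space M. norm (hat_theta (k+1) (\<lambda>i. X i \<omega>) - (a0, b0, a1, b1)) > \<delta>}"
      and "\<omega> \<notin> B1 \<union> B2 \<union> B3 \<union> B4 \<union> B5 \<union> B6 \<union> B7 \<union> B8"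
    then have "norm (hat_theta (k+1) (\<lambda>i. X i \<omega>) - (a0, b0, a1, b1)) \<le> \<delta>"
      using q \<delta> unfolding \<mu>_def
      by (intro error_le_of_small_sums)
        (auto simp: B1_def B2_def B3_def B4_def B5_def B6_def B7_def B8_def u_def n_def n'_def \<mu>_def not_le)
    with large show False
      by simp
  qed
  then have "measure M {\<omega>\<in>space M. norm (hat_theta (k+1) (\<lambda>i. X i \<omega>) - (a0, b0, a1, b1)) > \<delta>}
      \<le> measure M (B1 \<union> B2 \<union> B3 \<union> B4 \<union> B5 \<union> B6 \<union> B7 \<union> B8)"
    by (intro finite_measure_mono) (auto simp: B1_def B2_def B3_def B4_def B5_def B6_def B7_def B8_def)
  also have "\<dots> \<le> noise_var 0 / q + noise_var 1 / q + C * noise_var 0 / q + C * noise_var 1 / q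
      + (1 + C) / q + noise_var 0 / q + C * noise_var 0 / q + 4 / \<mu>^2 / q"
  proof -
    have "B1 \<in> sets M" "B2 \<in> sets M" "B3 \<in> sets M" "B4 \<in> sets M" "B5 \<in> sets M" "B6 \<in> sets M"
      "B7 \<in> sets M" "B8 \<in> sets M"
      unfolding B1_def B2_def B3_def B4_def B5_def B6_def B7_def B8_def by measurable
    moreover have "measure M B1 \<le> noise_var 0 / q" "measure M B2 \<le> noise_var 1 / q"
      "measure M B3 \<le> C * noise_var 0 / q" "measure M B4 \<le> C * noise_var 1 / q"
      "measure M B5 \<le> (1 + C) / q"
      using deviations[OF n[unfolded n_def], where \<eta>=0] deviations[OF n[unfolded n_def], where \<eta>=1]
      unfolding B1_def B2_def B3_def B4_def B5_def n_def by simp_all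
    moreover have "measure M B6 \<le> noise_var 0 / q" "measure M B7 \<le> C * noise_var 0 / q"
      "measure M B8 \<le> 4 / \<mu>^2 / q"
      using deviations[OF q8, where \<eta>=0]
      unfolding B6_def B7_def B8_def n'_def by simp_all
    ultimately show ?thesis
      by (intro measure_Un_le_add sets.Un)
  qed
  also have "\<dots> = D / q"
    by (simp add: D_def add_divide_distrib algebra_simps)
  finally show ?thesis .
qed

text \<open>Taking \<open>q = (|T\<^sub>r|/3)\<^sup>1\<^sup>/\<^sup>8\<close> in the previous lemma: this is the largest \<open>q\<close> allowed
  by \<open>q\<^sup>8 \<le> |T\<^sub>r\<^sub>-\<^sub>1|\<close>, and it tends to infinity, so the thresholds are eventually met.\<close>

lemma eventually_measure_large_error_le:
  assumes \<delta>: "\<delta> > 0"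
  obtains D where "eventually (\<lambda>r. measure M {\<omega>\<in>space M. norm (hat_theta r (\<lambda>i. X i \<omega>) - (a0, b0, a1, b1)) > \<delta>}
      \<le> D * real (card (Tset r)) powr (- (1/8))) sequentially"
proof -
  obtain C where C: "C \<ge> 0" and moments: "\<And>i. i \<ge> 1 \<Longrightarrow> integrable M (\<lambda>\<omega>. (X i \<omega>)^2)"
    "\<And>i. i \<ge> 1 \<Longrightarrow> (\<integral>\<omega>. (X i \<omega>)^2 \<partial>M) \<le> C"
    using second_moment_bounded by blast
  define \<mu> where "\<mu> = truncated_moment"
  define D where "D = 2 * noise_var 0 + noise_var 1 + C * (2 * noise_var 0 + noise_var 1) + (1 + C) + 4 / \<mu>^2"
  define Q where "Q = max 1 (max ((16 + 8 * \<bar>b0\<bar>) / \<mu>) ((96 / \<mu> + 2) / \<delta>))"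
  have "eventually (\<lambda>r. measure M {\<omega>\<in>space M. norm (hat_theta r (\<lambda>i. X i \<omega>) - (a0, b0, a1, b1)) > \<delta>}
      \<le> D * 3 powr (1/8) * real (card (Tset r)) powr (- (1/8))) sequentially"
    using eventually_ge_at_top[of "nat \<lceil>3 * Q^8\<rceil> + 1"]
  proof eventually_elim
    case (elim r)
    define k where "k = r - 1"
    define N where "N = real (card (Tset r))"
    define q where "q = root 8 (N / 3)"
    have r: "r = k + 1"
      using elim by (simp add: k_def)
    have Q: "Q \<ge> 1"
      by (simp add: Q_def)
    have "3 * Q^8 \<le> N"
      using card_Tset_ge[of r] elim by (simp add: N_def) linarith
    then have "root 8 (Q^8) \<le> q"
      by (simp add: q_def)
    then have "Q \<le> q"
      using Q by (simp add: real_root_power_cancel)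
    then have q: "q \<ge> 1" "q \<ge> (16 + 8 * \<bar>b0\<bar>) / truncated_moment" "q \<ge> (96 / truncated_moment + 2) / \<delta>"
      by (simp_all add: Q_def \<mu>_def)
    have "q^8 = N / 3"
      by (simp add: q_def N_def)
    also have "\<dots> \<le> real (card (Tset k))"
      using card_Tset_Suc[of k] card_Tset_pos[of k] by (simp add: N_def r)
    finally have "measure M {\<omega>\<in>space M. norm (hat_theta r (\<lambda>i. X i \<omega>) - (a0, b0, a1, b1)) > \<delta>} \<le> D / q"
      using measure_large_error_le[OF moments C \<delta> q] by (simp add: r D_def \<mu>_def)
    also have "D / q = D * 3 powr (1/8) * N powr (- (1/8))"
      using card_Tset_pos[of r]
      by (simp add: q_def N_def root_powr_inverse powr_divide powr_minus_divide)
    finally show ?case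
      by (simp add: N_def)
  qed
  then show ?thesis
    using that by blast
qed

end

section \<open>The superexponential rate\<close>

lemma eventually_scale_bounds:
  fixes b :: "nat \<Rightarrow> real" and K :: real
  assumes b_pos: "\<And>n. b n > 0"
    and lower: "filterlim (\<lambda>n. b n / sqrt (real n)) at_top sequentially"
    and upper: "(\<lambda>n. b n / sqrt (real n * ln (real n))) \<longlonglongrightarrow> 0"
    and K: "K > 0"
  shows "eventually (\<lambda>n. real n / (b n)^2 \<le> 1 \<and> K \<le> real n * ln (real n) / (b n)^2) sequentially"
proof -
  have "eventually (\<lambda>n. 1 \<le> b n / sqrt (real n)) sequentially"
    using lower by (simp add: filterlim_at_top)
  moreover have "eventually (\<lambda>n. \<bar>b n / sqrt (real n * ln (real n))\<bar> < 1 / sqrt K) sequentially"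
    using tendstoD[OF upper, of "1 / sqrt K"] K by (simp add: dist_real_def)
  moreover have "eventually (\<lambda>n. n \<ge> 3) sequentially"
    by (rule eventually_ge_at_top)
  ultimately show ?thesis
  proof eventually_elim
    case (elim n)
    have n: "real n \<ge> 3" and ln_n: "ln (real n) > 0" and b: "b n > 0"
      using elim b_pos by simp_all
    have "sqrt (real n) \<le> b n"
      using elim(1) n by (simp add: le_divide_eq)
    then have "(sqrt (real n))^2 \<le> (b n)^2"
      by (rule power_mono) simp
    then have "real n / (b n)^2 \<le> 1"
      using n b by simp
    moreover have "b n * sqrt K < sqrt (real n * ln (real n))"
      using elim(2) n ln_n b K by (simp add: field_simps)
    then have "(b n * sqrt K)^2 < (sqrt (real n * ln (real n)))^2"
      using b K by (intro power_strict_mono) auto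
    then have "K \<le> real n * ln (real n) / (b n)^2"
      using n ln_n b K by (simp add: power_mult_distrib le_divide_eq mult.commute)
    ultimately show ?case ..
  qed
qed

lemma ereal_mult_eln_le:
  fixes x y p c D K :: real
  assumes x: "0 \<le> x" "x \<le> 1" "K \<le> x * ln y" and y: "y > 0" and K: "K > 0" and c: "c > 0"
    and p: "0 \<le> p" "p \<le> D * y powr (- c)"
  shows "ereal x * eln p \<le> ereal (\<bar>ln D\<bar> - c * K)"
proof (cases "p = 0")
  case True
  have "x \<noteq> 0"
    using x(3) K by auto
  then have "ereal x * eln p = -\<infinity>"
    using True x(1) by (simp add: eln_def)
  then show ?thesis
    by (simp only:) simp
next
  case False
  then have "0 < D * y powr (- c)"
    using p by simp
  then have D: "D > 0"
    using y by (simp add: zero_less_mult_iff)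
  have "ln p \<le> ln (D * y powr (- c))"
    using False p by simp
  also have "\<dots> = ln D - c * ln y"
    using D y by (simp add: ln_mult)
  finally have "x * ln p \<le> x * (ln D - c * ln y)"
    using x(1) by (rule mult_left_mono)
  also have "\<dots> = x * ln D - c * (x * ln y)"
    by (simp add: algebra_simps)
  also have "\<dots> \<le> \<bar>ln D\<bar> - c * K"
    using x c mult_left_mono[OF x(2), of "\<bar>ln D\<bar>"] abs_ge_self[of "ln D"] mult_left_mono[OF x(3), of c]
    by (smt (verit) mult.commute mult_right_mono)
  finally show ?thesis
    using False p by (simp add: eln_def)
qed

lemma limsup_scaled_eln_eq_minus_infinity:
  fixes b p :: "nat \<Rightarrow> real" and N :: "nat \<Rightarrow> nat" and c D :: real
  assumes b_pos: "\<And>n. b n > 0"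
    and lower: "filterlim (\<lambda>n. b n / sqrt (real n)) at_top sequentially"
    and upper: "(\<lambda>n. b n / sqrt (real n * ln (real n))) \<longlonglongrightarrow> 0"
    and N: "filterlim N at_top sequentially"
    and p: "\<And>r. p r \<ge> 0" and c: "c > 0"
    and decay: "eventually (\<lambda>r. p r \<le> D * real (N r) powr (- c)) sequentially"
  shows "limsup (\<lambda>r. ereal (real (N r) / (b (N r))^2) * eln (p r)) = -\<infinity>"
proof (rule ereal_bot)
  fix B :: real
  define K where "K = (\<bar>ln D\<bar> + \<bar>B\<bar>) / c + 1"
  have "0 \<le> (\<bar>ln D\<bar> + \<bar>B\<bar>) / c"
    using c by simp
  then have K: "K > 0"
    by (simp add: K_def)
  have "c * K = \<bar>ln D\<bar> + \<bar>B\<bar> + c"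
    using c by (simp add: K_def field_simps)
  then have B: "\<bar>ln D\<bar> - c * K \<le> B"
    using c abs_ge_minus_self[of B] by linarith
  have "eventually (\<lambda>r. real (N r) / (b (N r))^2 \<le> 1
      \<and> K \<le> real (N r) * ln (real (N r)) / (b (N r))^2) sequentially"
    using eventually_scale_bounds[OF b_pos lower upper K] N by (rule eventually_compose_filterlim)
  with decay eventually_ge_at_top[of 0]
  have "eventually (\<lambda>r. ereal (real (N r) / (b (N r))^2) * eln (p r) \<le> ereal B) sequentially"
  proof eventually_elim
    case (elim r)
    have "0 < real (N r)"
      using elim K by (cases "N r = 0") auto
    then have "ereal (real (N r) / (b (N r))^2) * eln (p r) \<le> ereal (\<bar>ln D\<bar> - c * K)"
      using elim K c p[of r] by (intro ereal_mult_eln_le) (simp_all add: mult.commute)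
    then show ?case
      using B order_trans by fastforce
  qed
  then show "limsup (\<lambda>r. ereal (real (N r) / (b (N r))^2) * eln (p r)) \<le> ereal B"
    by (rule Limsup_bounded)
qed

lemma filterlim_card_Tset: "filterlim (\<lambda>r. card (Tset r)) at_top sequentially"
proof (rule filterlim_at_top_mono[OF filterlim_ident])
  have "r \<le> card (Tset r)" for r
    using card_Tset_ge[of r] by simp
  then show "eventually (\<lambda>r. r \<le> card (Tset r)) sequentially"
    by (intro always_eventually) simp
qed

theorem proposition4p2:
  fixes M :: "'a measure"
    and X eps :: "nat \<Rightarrow> 'a \<Rightarrow> real"
    and alpha0 beta0 alpha1 beta1 sigma rho :: real
    and b :: "nat \<Rightarrow> real"
  assumes "prob_space M"
    and "\<And>n. X n \<in> borel_measurable M"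
    and "\<And>n. eps n \<in> borel_measurable M"
    and "\<And>k::nat. integrable M (\<lambda>\<omega>. (X 1 \<omega>) ^ k)"
    and "\<bar>alpha0\<bar> < 1" and "\<bar>alpha1\<bar> < 1"
    and "sigma > 0" and "\<bar>rho\<bar> < 1"
    and "\<And>n. n \<ge> 1 \<Longrightarrow> \<forall>\<omega>\<in>space M. X (2*n) \<omega> = alpha0 * X n \<omega> + beta0 + eps (2*n) \<omega>"
    and "\<And>n. n \<ge> 1 \<Longrightarrow> \<forall>\<omega>\<in>space M. X (2*n+1) \<omega> = alpha1 * X n \<omega> + beta1 + eps (2*n+1) \<omega>"
    and "\<And>n. n \<ge> 1 \<Longrightarrow> distributed M lborel (\<lambda>\<omega>. (eps (2*n) \<omega>, eps (2*n+1) \<omega>))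
                 (\<lambda>p. ennreal (binormal_density (sigma^2) rho p))"
    and "prob_space.indep_vars M (\<lambda>_. lborel)
           (\<lambda>n \<omega>. if n = 0 then (X 1 \<omega>, 0) else (eps (2*n) \<omega>, eps (2*n+1) \<omega>)) UNIV"
    and "mono b" and "\<And>n. b n > 0"
    and "filterlim (\<lambda>n. b n / sqrt (real n)) at_top sequentially"
    and "(\<lambda>n. b n / sqrt (real n * ln (real n))) \<longlonglongrightarrow> 0"
    and "delta > 0"
  shows "limsup (\<lambda>r. ereal (real (card (Tset r)) / (b (card (Tset r)))^2)
            * eln (measure M {\<omega>\<in>space M.
                 norm (hat_theta r (\<lambda>i. X i \<omega>) - (alpha0, beta0, alpha1, beta1)) > delta}))
         = -\<infinity>"
proof -
  have "innovation X eps = (\<lambda>n \<omega>. if n = 0 then (X 1 \<omega>, 0) else (eps (2*n) \<omega>, eps (2*n+1) \<omega>))"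
    by (simp add: fun_eq_iff innovation_def)
  then interpret gaussian_bar M X eps alpha0 beta0 alpha1 beta1 sigma rho
    using assms by (intro gaussian_bar.intro gaussian_bar_axioms.intro) simp_all
  obtain D where "eventually (\<lambda>r. measure M {\<omega>\<in>space M.
      norm (hat_theta r (\<lambda>i. X i \<omega>) - (alpha0, beta0, alpha1, beta1)) > delta}
        \<le> D * real (card (Tset r)) powr (- (1/8))) sequentially"
    using eventually_measure_large_error_le[OF \<open>delta > 0\<close>] by blast
  then show ?thesis
    by (intro limsup_scaled_eln_eq_minus_infinity[OF assms(14-16) filterlim_card_Tset]) simp_all
qed

end
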